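(* Let $A\in\mathbb{R}^{2\times 2}$ be Hurwitz (all eigenvalues with negative real part), $b,c^\mathsf{T}\in\mathbb{R}^2$, and let $g(t)=ce^{At}b\,\mathds{1}_{[0,\infty)}(t)$ be the impulse response of the causal stable second-order LTI system $(A,b,c)$. Then the system is strongly unimodal if and only if $g$ is nonnegative and $$\dot g(0)^2-g(0)\ddot g(0)\ge 0,$$ where $g(0)=cb$, $\dot g(0)=cAb$, $\ddot g(0)=cA^2b$.
   Context: The triple $(A,b,c)$ denotes the LTI system $\dot x=Ax+bu$, $y=cx$. Convolution: $(g\ast u)(t)=\int_{-\infty}^{\infty}g(t-\tau)u(\tau)\,d\tau$. A function $f:\mathbb{R}\to\mathbb{R}$ is unimodal (quasi-concave) if $f(\lambda x+(1-\lambda)y)\ge\min\{f(x),f(y)\}$ for all $x,y$ and $\lambda\in[0,1]$; the set of such functions is $\mathcal{S}_{qc}$. The system is strongly unimodal if $g\ast u\in\mathcal{S}_{qc}$ for all $u\in\mathcal{S}_{qc}$. *)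

theory Defs
  imports "HOL-Analysis.Analysis"
begin

definition mat_pow :: "real^'n^'n \<Rightarrow> nat \<Rightarrow> real^'n^'n" where
  "mat_pow M k = ((\<lambda>X. M ** X) ^^ k) (mat 1)"

definition mat_exp :: "real^'n^'n \<Rightarrow> real^'n^'n" where
  "mat_exp M = (\<Sum>k. (1 / fact k) *\<^sub>R mat_pow M k)"

definition cmat :: "real^'n^'n \<Rightarrow> complex^'n^'n" where
  "cmat M = (\<chi> i j. complex_of_real (M $ i $ j))"

definition hurwitz :: "real^'n^'n \<Rightarrow> bool" where
  "hurwitz M \<longleftrightarrow>
     (\<forall>(l::complex) (v::complex^'n). v \<noteq> 0 \<and> cmat M *v v = l *s v \<longrightarrow> Re l < 0)"

definition impulse_resp :: "real^'n^'n \<Rightarrow> real^'n \<Rightarrow> real^'n \<Rightarrow> real \<Rightarrow> real" where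
  "impulse_resp A b c t = (if t \<ge> 0 then c \<bullet> (mat_exp (t *\<^sub>R A) *v b) else 0)"

text \<open>Unimodal (quasi-concave) functions.\<close>

definition quasi_concave :: "(real \<Rightarrow> real) \<Rightarrow> bool" where
  "quasi_concave f \<longleftrightarrow>
     (\<forall>x y l. 0 \<le> l \<and> l \<le> 1 \<longrightarrow> f (l * x + (1 - l) * y) \<ge> min (f x) (f y))"

definition convolution :: "(real \<Rightarrow> real) \<Rightarrow> (real \<Rightarrow> real) \<Rightarrow> real \<Rightarrow> real" where
  "convolution g u t = (LINT \<tau>|lborel. g (t - \<tau>) * u \<tau>)"

definition strongly_unimodal :: "real^'n^'n \<Rightarrow> real^'n \<Rightarrow> real^'n \<Rightarrow> bool" where
  "strongly_unimodal A b c \<longleftrightarrow>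
     (\<forall>u. quasi_concave u \<and>
          (\<forall>t. integrable lborel (\<lambda>\<tau>. impulse_resp A b c (t - \<tau>) * u \<tau>))
          \<longrightarrow> quasi_concave (convolution (impulse_resp A b c) u))"

end

theory Submission
  imports Defs
begin

(* The impulse response g(t) = c e^(tA) b is, for t >= 0, the exponential generating function of the
   Markov parameters m k = c A^k b, which by Cayley-Hamilton satisfy m (k+2) = tr A m (k+1) - det A m k,
   with tr A < 0 < det A for Hurwitz A.  Solving this recurrence, g is a combination of two decaying
   exponentials, (a + b t) e^(lt), or a damped oscillation, and m 1^2 - m 0 m 2 is -ab (l1 - l2)^2,
   a perfect square, or a positive definite form, respectively.

   Sufficiency: a nonnegative causal kernel with g a g d <= g b g c whenever a <= b, c <= d and
   a + d = b + c (a PF2 kernel) maps functions that change sign at most once, from + to -, to such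
   functions.  Forward differences of a quasi-concave u have this property, and a continuous function all
   of whose forward differences have it is quasi-concave.  The admissible exponential kernels are PF2,
   and a nonnegative damped oscillation is zero.

   Necessity: convolving a kernel that dips below zero with a short pulse, or a log-convex sum of two
   exponentials with a step plus a pulse, gives a response that falls and then rises again. *)

section \<open>The impulse response as a power series\<close>

definition markov_param :: "real^'n^'n \<Rightarrow> real^'n \<Rightarrow> real^'n \<Rightarrow> nat \<Rightarrow> real" where
  "markov_param A b c k = c \<bullet> (mat_pow A k *v b)"

lemma mat_pow_0 [simp]: "mat_pow M 0 = mat 1"
  by (simp add: mat_pow_def)

lemma mat_pow_Suc: "mat_pow M (Suc k) = M ** mat_pow M k"
  by (simp add: mat_pow_def)

lemma mat_pow_scaleR: "mat_pow (t *\<^sub>R A) k = (t ^ k) *\<^sub>R mat_pow A k"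
  by (induction k) (auto simp: mat_pow_Suc scalar_matrix_assoc matrix_scalar_ac mult.commute)

lemma abs_mat_pow_entry_le:
  fixes A :: "real^'n^'n"
  shows "\<bar>mat_pow A k $ i $ j\<bar> \<le> (\<Sum>i\<in>UNIV. \<Sum>j\<in>UNIV. \<bar>A$i$j\<bar>) ^ k"
proof (induction k arbitrary: i j)
  case 0
  then show ?case by (simp add: mat_def)
next
  case (Suc k)
  define N where "N = (\<Sum>i\<in>UNIV. \<Sum>j\<in>UNIV. \<bar>A$i$j\<bar>)"
  have "\<bar>mat_pow A (Suc k) $ i $ j\<bar> = \<bar>\<Sum>l\<in>UNIV. A$i$l * mat_pow A k $ l $ j\<bar>"
    by (simp add: mat_pow_Suc matrix_matrix_mult_def)
  also have "\<dots> \<le> (\<Sum>l\<in>UNIV. \<bar>A$i$l\<bar>) * N ^ k"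
    unfolding sum_distrib_right N_def
    by (rule order_trans[OF sum_abs]) (auto intro!: sum_mono mult_left_mono Suc simp: abs_mult)
  also have "\<dots> \<le> N * N ^ k"
    unfolding N_def
    by (intro mult_right_mono member_le_sum[where f="\<lambda>i. \<Sum>j\<in>UNIV. \<bar>A$i$j\<bar>"])
      (auto intro!: sum_nonneg zero_le_power)
  finally show ?case by (simp add: N_def)
qed

lemma norm_mat_pow_le:
  fixes A :: "real^'n^'n"
  shows "norm (mat_pow A k) \<le> real (CARD('n) * CARD('n)) * (\<Sum>i\<in>UNIV. \<Sum>j\<in>UNIV. \<bar>A$i$j\<bar>) ^ k"
proof -
  have "norm (mat_pow A k) \<le> (\<Sum>i\<in>UNIV. norm (mat_pow A k $ i))"
    unfolding norm_vec_def by (rule L2_set_le_sum) simp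
  also have "\<dots> \<le> (\<Sum>i\<in>UNIV. \<Sum>j\<in>UNIV. \<bar>mat_pow A k $ i $ j\<bar>)"
    by (intro sum_mono norm_le_l1_cart)
  also have "\<dots> \<le> (\<Sum>i::'n\<in>UNIV. \<Sum>j::'n\<in>UNIV. (\<Sum>i\<in>UNIV. \<Sum>j\<in>UNIV. \<bar>A$i$j\<bar>) ^ k)"
    by (intro sum_mono abs_mat_pow_entry_le)
  finally show ?thesis by simp
qed

lemma summable_mat_exp:
  fixes A :: "real^'n^'n"
  shows "summable (\<lambda>k. (1 / fact k) *\<^sub>R mat_pow A k)"
proof (rule summable_norm_cancel, rule summable_comparison_test')
  define N where "N = (\<Sum>i\<in>UNIV. \<Sum>j\<in>UNIV. \<bar>A$i$j\<bar>)"
  define C where "C = real (CARD('n) * CARD('n))"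
  show "summable (\<lambda>k. C * (N ^ k / fact k))"
    using summable_exp[of N] by (intro summable_mult) (simp add: divide_inverse mult.commute)
  show "norm (norm ((1 / fact k) *\<^sub>R mat_pow A k)) \<le> C * (N ^ k / fact k)" for k
    using norm_mat_pow_le[of A k] by (simp add: N_def C_def divide_right_mono)
qed

lemma impulse_resp_sums:
  fixes A :: "real^'n^'n"
  assumes "0 \<le> t"
  shows "(\<lambda>k. t ^ k / fact k * markov_param A b c k) sums impulse_resp A b c t"
proof -
  have "bounded_linear (\<lambda>M::real^'n^'n. c \<bullet> (M *v b))"
    by (simp add: linear_conv_bounded_linear[symmetric] linear_iff matrix_vector_mult_add_rdistrib
        inner_add_right flip: scaleR_matrix_vector_assoc)
  from bounded_linear.sums[OF this summable_sums[OF summable_mat_exp[of "t *\<^sub>R A"]]]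
  show ?thesis
    using assms
    by (simp add: impulse_resp_def markov_param_def mat_exp_def mat_pow_scaleR
        flip: scaleR_matrix_vector_assoc)
qed

definition trace2 :: "real^2^2 \<Rightarrow> real" where
  "trace2 A = A$1$1 + A$2$2"

definition det2 :: "real^2^2 \<Rightarrow> real" where
  "det2 A = A$1$1 * A$2$2 - A$1$2 * A$2$1"

lemma cayley_hamilton2: "A ** A = trace2 A *\<^sub>R A - det2 A *\<^sub>R mat 1"
  by (simp add: vec_eq_iff forall_2 matrix_matrix_mult_def sum_2 trace2_def det2_def mat_def
      algebra_simps)

lemma markov_param_Suc_Suc:
  "markov_param A b c (Suc (Suc k)) =
     trace2 A * markov_param A b c (Suc k) - det2 A * markov_param A b c k"
proof -
  have "mat_pow A (Suc (Suc k)) = (A ** A) ** mat_pow A k"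
    by (simp add: mat_pow_Suc matrix_mul_assoc)
  also have "\<dots> = trace2 A *\<^sub>R mat_pow A (Suc k) - det2 A *\<^sub>R mat_pow A k"
    by (simp add: cayley_hamilton2 mat_pow_Suc vec_eq_iff matrix_matrix_mult_def sum_2 forall_2
        mat_def algebra_simps)
  finally show ?thesis
    by (simp add: markov_param_def matrix_vector_mult_diff_rdistrib inner_diff_right
        flip: scaleR_matrix_vector_assoc)
qed

lemma char_root_has_eigenvector:
  fixes A :: "real^2^2" and \<mu> :: complex
  assumes "\<mu>^2 - of_real (trace2 A) * \<mu> + of_real (det2 A) = 0"
  shows "\<exists>v. v \<noteq> 0 \<and> cmat A *v v = \<mu> *s v"
proof -
  define a11 where "a11 = complex_of_real (A$1$1)"
  define a12 where "a12 = complex_of_real (A$1$2)"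
  define a21 where "a21 = complex_of_real (A$2$1)"
  define a22 where "a22 = complex_of_real (A$2$2)"
  have char: "\<mu>^2 - (a11 + a22) * \<mu> + (a11 * a22 - a12 * a21) = 0"
    using assms by (simp add: trace2_def det2_def a11_def a12_def a21_def a22_def)
  have eigen_iff: "cmat A *v v = \<mu> *s v \<longleftrightarrow>
      a11 * v$1 + a12 * v$2 = \<mu> * v$1 \<and> a21 * v$1 + a22 * v$2 = \<mu> * v$2" for v
    by (simp add: vec_eq_iff forall_2 cmat_def matrix_vector_mult_def sum_2
        a11_def a12_def a21_def a22_def)
  have "a12 = 0 \<Longrightarrow> (\<mu> - a11) * (\<mu> - a22) = 0"
    using char by (simp add: algebra_simps power2_eq_square)
  then consider "a12 \<noteq> 0" | "a12 = 0" "\<mu> = a22" | "a12 = 0" "\<mu> = a11" "\<mu> \<noteq> a22"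
    by fastforce
  then show ?thesis
  proof cases
    case 1
    then show ?thesis using char
      by (intro exI[of _ "vector [a12, \<mu> - a11]"], unfold eigen_iff)
        (auto simp: vec_eq_iff forall_2 algebra_simps power2_eq_square)
  next
    case 2
    then show ?thesis
      by (intro exI[of _ "vector [0, 1]"], unfold eigen_iff) (auto simp: vec_eq_iff forall_2)
  next
    case 3
    then show ?thesis
      by (intro exI[of _ "vector [a11 - a22, a21]"], unfold eigen_iff)
        (auto simp: vec_eq_iff forall_2 algebra_simps)
  qed
qed

lemma hurwitz_trace2_det2:
  fixes A :: "real^2^2"
  assumes "hurwitz A"
  shows "trace2 A < 0" "0 < det2 A"
proof -
  define t where "t = trace2 A"
  define d where "d = det2 A"
  have root: "Re \<mu> < 0" if "\<mu>^2 - of_real t * \<mu> + of_real d = 0" for \<mu>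
    using char_root_has_eigenvector[of \<mu> A] that assms by (auto simp: hurwitz_def t_def d_def)
  have "t < 0 \<and> 0 < d"
  proof (cases "0 \<le> t^2 - 4*d")
    case True
    define r1 where "r1 = (t + sqrt (t^2 - 4*d)) / 2"
    define r2 where "r2 = (t - sqrt (t^2 - 4*d)) / 2"
    have sq: "sqrt (t^2 - 4*d) ^ 2 = t^2 - 4*d" using True by simp
    have "r1^2 - t * r1 + d = 0" "r2^2 - t * r2 + d = 0"
      unfolding r1_def r2_def using sq by (auto simp: power2_eq_square field_simps)
    then have "r1 < 0" "r2 < 0"
      using root[of "of_real r1"] root[of "of_real r2"]
      by (metis Re_complex_of_real of_real_0 of_real_add of_real_diff of_real_mult of_real_power)+
    moreover have "t = r1 + r2" "d = r1 * r2"
      unfolding r1_def r2_def using sq by (auto simp: power2_eq_square field_simps)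
    ultimately show ?thesis by (simp add: mult_neg_neg)
  next
    case False
    define \<mu> where "\<mu> = Complex (t/2) (sqrt (4*d - t^2) / 2)"
    have "sqrt (4*d - t^2) ^ 2 = 4*d - t^2" using False by simp
    then have "\<mu>^2 - of_real t * \<mu> + of_real d = 0"
      by (simp add: \<mu>_def complex_eq_iff power2_eq_square field_simps Complex_eq)
    then have "Re \<mu> < 0" by (rule root)
    then have "t < 0" by (simp add: \<mu>_def)
    moreover have "0 < d" using False by (smt (verit) zero_le_power2)
    ultimately show ?thesis by simp
  qed
  then show "trace2 A < 0" "0 < det2 A" by (simp_all add: t_def d_def)
qed

section \<open>Second-order linear recurrences\<close>

lemma linrec2_distinct_roots:
  fixes m :: "nat \<Rightarrow> real"
  assumes rec: "\<And>k. m (Suc (Suc k)) = \<sigma> * m (Suc k) - \<delta> * m k"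
    and root1: "l1^2 = \<sigma> * l1 - \<delta>" and root2: "l2^2 = \<sigma> * l2 - \<delta>" and "l1 \<noteq> l2"
  obtains \<alpha> \<beta> where "\<And>k. m k = \<alpha> * l1 ^ k + \<beta> * l2 ^ k"
proof
  define \<alpha> where "\<alpha> = (m 1 - l2 * m 0) / (l1 - l2)"
  define \<beta> where "\<beta> = (l1 * m 0 - m 1) / (l1 - l2)"
  have "l1 - l2 \<noteq> 0" using \<open>l1 \<noteq> l2\<close> by simp
  show "m k = \<alpha> * l1 ^ k + \<beta> * l2 ^ k" for k
  proof (induction k rule: induct_nat_012)
    case 0
    show ?case using \<open>l1 - l2 \<noteq> 0\<close> by (simp add: \<alpha>_def \<beta>_def divide_simps) (simp add: algebra_simps)
  next
    case 1
    show ?case using \<open>l1 - l2 \<noteq> 0\<close> by (simp add: \<alpha>_def \<beta>_def divide_simps) (simp add: algebra_simps)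
  next
    case (ge2 k)
    have "m (Suc (Suc k)) = \<sigma> * (\<alpha> * l1 ^ Suc k + \<beta> * l2 ^ Suc k) - \<delta> * (\<alpha> * l1 ^ k + \<beta> * l2 ^ k)"
      using rec ge2 by simp
    also have "\<dots> = \<alpha> * l1^k * (\<sigma> * l1 - \<delta>) + \<beta> * l2^k * (\<sigma> * l2 - \<delta>)"
      by (simp add: algebra_simps)
    finally show ?case
      by (simp only: root1[symmetric] root2[symmetric]) (simp add: power2_eq_square)
  qed
qed

lemma linrec2_double_root:
  fixes m :: "nat \<Rightarrow> real"
  assumes rec: "\<And>k. m (Suc (Suc k)) = 2 * l * m (Suc k) - l^2 * m k"
  obtains \<alpha> \<beta> where "\<And>k. m k = \<alpha> * l ^ k + \<beta> * (real k * l ^ (k - 1))"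
proof
  show "m k = m 0 * l ^ k + (m 1 - l * m 0) * (real k * l ^ (k - 1))" for k
  proof (induction k rule: induct_nat_012)
    case (ge2 k)
    then have "m (Suc (Suc k)) = 2 * l * (m 0 * l ^ Suc k + (m 1 - l * m 0) * (real (Suc k) * l ^ k))
        - l^2 * (m 0 * l ^ k + (m 1 - l * m 0) * (real k * l ^ (k - 1)))"
      using rec by simp
    then show ?case
      by (cases k) (simp_all add: algebra_simps power2_eq_square)
  qed simp_all
qed

lemma linrec2_complex_roots:
  fixes m :: "nat \<Rightarrow> real" and \<mu> :: complex
  assumes rec: "\<And>k. m (Suc (Suc k)) = \<sigma> * m (Suc k) - \<delta> * m k"
    and root: "\<mu>^2 = of_real \<sigma> * \<mu> - of_real \<delta>" and "Im \<mu> \<noteq> 0"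
  obtains z where "\<And>k. m k = Re (z * \<mu> ^ k)"
proof
  define z where "z = Complex (m 0) ((m 0 * Re \<mu> - m 1) / Im \<mu>)"
  show "m k = Re (z * \<mu> ^ k)" for k
  proof (induction k rule: induct_nat_012)
    case 1
    show ?case using \<open>Im \<mu> \<noteq> 0\<close> by (simp add: z_def)
  next
    case (ge2 k)
    have "z * \<mu> ^ Suc (Suc k) = z * \<mu> ^ k * \<mu>^2"
      by (simp add: power2_eq_square algebra_simps)
    also have "\<dots> = of_real \<sigma> * (z * \<mu> ^ Suc k) - of_real \<delta> * (z * \<mu> ^ k)"
      by (simp add: root algebra_simps)
    finally show ?case using rec ge2 by simp
  qed (simp add: z_def)
qed

lemma sums_exp_times_power:
  fixes l t :: real
  shows "(\<lambda>k. t ^ k / fact k * l ^ k) sums exp (l * t)"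
  using exp_converges[of "l * t"] by (simp add: power_mult_distrib divide_inverse ac_simps)

lemma sums_two_exp:
  fixes \<alpha> \<beta> l1 l2 t :: real
  shows "(\<lambda>k. t ^ k / fact k * (\<alpha> * l1 ^ k + \<beta> * l2 ^ k)) sums (\<alpha> * exp (l1 * t) + \<beta> * exp (l2 * t))"
  using sums_add[OF sums_mult[OF sums_exp_times_power, of \<alpha>] sums_mult[OF sums_exp_times_power, of \<beta>]]
  by (simp add: algebra_simps)

lemma sums_exp_linear:
  fixes \<alpha> \<beta> l t :: real
  shows "(\<lambda>k. t ^ k / fact k * (\<alpha> * l ^ k + \<beta> * (real k * l ^ (k - 1)))) sums ((\<alpha> + \<beta> * t) * exp (l * t))"
proof -
  have "t * (t ^ j / fact j * l ^ j) = t ^ Suc j / fact (Suc j) * (real (Suc j) * l ^ (Suc j - 1))" for j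
    by (simp add: divide_simps del: of_nat_Suc)
  then have "(\<lambda>j. t ^ Suc j / fact (Suc j) * (real (Suc j) * l ^ (Suc j - 1))) sums (t * exp (l * t))"
    using sums_mult[OF sums_exp_times_power, of t] by simp
  then have "(\<lambda>k. t ^ k / fact k * (real k * l ^ (k - 1))) sums (t * exp (l * t))"
    by (subst (asm) sums_Suc_iff) simp
  from sums_add[OF sums_mult[OF sums_exp_times_power, of \<alpha>] sums_mult[OF this, of \<beta>]]
  show ?thesis by (simp add: algebra_simps)
qed

lemma sums_complex_exp:
  fixes t :: real and z \<mu> :: complex
  shows "(\<lambda>k. t ^ k / fact k * Re (z * \<mu> ^ k)) sums Re (z * exp (\<mu> * of_real t))"
proof -
  have "z * ((\<mu> * of_real t) ^ k /\<^sub>R fact k) = (t ^ k / fact k) *\<^sub>R (z * \<mu> ^ k)" for k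
    by (simp add: power_mult_distrib scaleR_conv_of_real field_simps)
  then have eq: "(\<lambda>k. Re (z * ((\<mu> * of_real t) ^ k /\<^sub>R fact k))) = (\<lambda>k. t ^ k / fact k * Re (z * \<mu> ^ k))"
    by simp
  have "(\<lambda>k. Re (z * ((\<mu> * of_real t) ^ k /\<^sub>R fact k))) sums Re (z * exp (\<mu> * of_real t))"
    by (intro sums_Re sums_mult exp_converges)
  then show ?thesis by (simp only: eq)
qed

section \<open>Quasi-concavity and single crossing\<close>

lemma quasi_concave_iff_between:
  "quasi_concave u \<longleftrightarrow> (\<forall>x w y. x \<le> w \<longrightarrow> w \<le> y \<longrightarrow> min (u x) (u y) \<le> u w)"
proof
  assume qc: "quasi_concave u"
  show "\<forall>x w y. x \<le> w \<longrightarrow> w \<le> y \<longrightarrow> min (u x) (u y) \<le> u w"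
  proof (intro allI impI)
    fix x w y :: real
    assume "x \<le> w" "w \<le> y"
    show "min (u x) (u y) \<le> u w"
    proof (cases "x = y")
      case False
      define l where "l = (y - w) / (y - x)"
      have "x < y" using \<open>x \<le> w\<close> \<open>w \<le> y\<close> False by simp
      then have "0 \<le> l" "l \<le> 1" "l * (y - x) = y - w"
        using \<open>x \<le> w\<close> \<open>w \<le> y\<close> by (auto simp: l_def field_simps)
      then have "0 \<le> l" "l \<le> 1" "l * x + (1 - l) * y = w"
        by (simp_all add: algebra_simps)
      then show ?thesis using qc unfolding quasi_concave_def by metis
    qed (use \<open>x \<le> w\<close> \<open>w \<le> y\<close> in auto)
  qed
next
  assume between: "\<forall>x w y. x \<le> w \<longrightarrow> w \<le> y \<longrightarrow> min (u x) (u y) \<le> u w"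
  show "quasi_concave u"
    unfolding quasi_concave_def
  proof (intro allI impI)
    fix x y l :: real
    assume "0 \<le> l \<and> l \<le> 1"
    then have "min x y \<le> l * x + (1 - l) * y" "l * x + (1 - l) * y \<le> max x y"
      using convex_bound_le[of "-x" "- min x y" "-y" l "1 - l"]
        convex_bound_le[of x "max x y" y l "1 - l"]
      by auto
    then show "min (u x) (u y) \<le> u (l * x + (1 - l) * y)"
      using between[rule_format, of "min x y" "l * x + (1 - l) * y" "max x y"]
      by (cases "x \<le> y") (auto simp: min_def max_def split: if_splits)
  qed
qed

definition single_crossing :: "(real \<Rightarrow> real) \<Rightarrow> bool" where
  "single_crossing \<phi> \<longleftrightarrow> (\<forall>s t. \<phi> s < 0 \<longrightarrow> s < t \<longrightarrow> \<phi> t \<le> 0)"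

lemma single_crossing_cases:
  assumes "single_crossing \<phi>"
  obtains "\<And>\<tau>. 0 \<le> \<phi> \<tau>" | "\<And>\<tau>. \<phi> \<tau> \<le> 0" | p where "\<And>\<tau>. \<tau> < p \<Longrightarrow> 0 \<le> \<phi> \<tau>" "\<And>\<tau>. p < \<tau> \<Longrightarrow> \<phi> \<tau> \<le> 0"
proof -
  define N where "N = {\<tau>. \<phi> \<tau> < 0}"
  have after_N: "\<phi> \<tau> \<le> 0" if "y \<in> N" "y < \<tau>" for y \<tau>
    using assms that by (auto simp: single_crossing_def N_def)
  consider "N = {}" | "N \<noteq> {}" "\<not> bdd_below N" | "N \<noteq> {}" "bdd_below N" by fast
  then show ?thesis
  proof cases
    case 1
    show ?thesis
      by (rule that(1)) (use 1 in \<open>auto simp: N_def not_less\<close>)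
  next
    case 2
    show ?thesis
    proof (rule that(2))
      fix \<tau>
      obtain y where "y \<in> N" "y < \<tau>"
        using 2 unfolding bdd_below_def by (meson not_le)
      then show "\<phi> \<tau> \<le> 0" by (rule after_N)
    qed
  next
    case 3
    show ?thesis
    proof (rule that(3)[of "Inf N"])
      show "0 \<le> \<phi> \<tau>" if "\<tau> < Inf N" for \<tau>
      proof -
        have "\<tau> \<notin> N" using cInf_lower[of \<tau> N] \<open>bdd_below N\<close> that by linarith
        then show ?thesis by (simp add: N_def)
      qed
      show "\<phi> \<tau> \<le> 0" if "Inf N < \<tau>" for \<tau>
        using cInf_less_iff[OF 3] that after_N by blast
    qed
  qed
qed

lemma single_crossing_forward_difference:
  assumes qc: "quasi_concave u" and "0 < \<delta>"
  shows "single_crossing (\<lambda>t. u (t + \<delta>) - u t)"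
  unfolding single_crossing_def
proof (intro allI impI, rule ccontr)
  fix s t
  assume fall: "u (s + \<delta>) - u s < 0" and "s < t" and "\<not> u (t + \<delta>) - u t \<le> 0"
  then have rise: "u t < u (t + \<delta>)" by simp
  have btw: "min (u x) (u z) \<le> u y" if "x \<le> y" "y \<le> z" for x y z
    using qc that by (auto simp: quasi_concave_iff_between)
  show False
  proof (cases "t \<le> s + \<delta>")
    case True
    then show False
      using btw[of s "s + \<delta>" "t + \<delta>"] btw[of s t "s + \<delta>"] fall rise \<open>s < t\<close> \<open>0 < \<delta>\<close> by auto
  next
    case False
    then show False
      using btw[of "s + \<delta>" t "t + \<delta>"] btw[of s "s + \<delta>" t] btw[of s t "t + \<delta>"] fall rise \<open>s < t\<close> \<open>0 < \<delta>\<close>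
      by auto
  qed
qed

lemma continuous_below_level_interval:
  fixes h :: "real \<Rightarrow> real"
  assumes cont: "continuous_on UNIV h" and "x \<le> w" "w \<le> y" "h w < c" "c \<le> h x" "c \<le> h y"
  obtains a b where "a < w" "w < b" "c \<le> h a" "c \<le> h b" "\<And>z. a < z \<Longrightarrow> z < b \<Longrightarrow> h z < c"
proof -
  define S1 where "S1 = {x..w} \<inter> h -` {c..}"
  define S2 where "S2 = {w..y} \<inter> h -` {c..}"
  have "closed (h -` {c..})"
    using cont by (intro continuous_closed_vimage) (auto simp: continuous_on_eq_continuous_at)
  then have "compact S1" "compact S2"
    unfolding S1_def S2_def by (auto intro: compact_Int_closed)
  moreover have "x \<in> S1" "y \<in> S2" using assms by (auto simp: S1_def S2_def)
  ultimately obtain a b where a: "a \<in> S1" "\<And>z. z \<in> S1 \<Longrightarrow> z \<le> a"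
    and b: "b \<in> S2" "\<And>z. z \<in> S2 \<Longrightarrow> b \<le> z"
    using compact_attains_sup[of S1] compact_attains_inf[of S2] by blast
  show ?thesis
  proof
    show "c \<le> h a" "c \<le> h b" using a(1) b(1) by (auto simp: S1_def S2_def)
    with \<open>h w < c\<close> have "a \<noteq> w" "b \<noteq> w" by auto
    then show "a < w" "w < b" using a(1) b(1) by (auto simp: S1_def S2_def)
    show "h z < c" if "a < z" "z < b" for z
    proof (rule ccontr)
      assume "\<not> h z < c"
      then have "z \<in> S1 \<or> z \<in> S2"
        using a(1) b(1) that by (auto simp: S1_def S2_def)
      then show False using a(2) b(2) that by force
    qed
  qed
qed

text \<open>If h dips below a level c between two points above it, the dip is an interval (a, b) and
  the step d = (b - a) / 2 exhibits a fall at a followed by a rise at a + d.\<close>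

lemma quasi_concave_if_single_crossing_differences:
  fixes h :: "real \<Rightarrow> real"
  assumes cont: "continuous_on UNIV h"
    and crossing: "\<And>\<delta>. 0 < \<delta> \<Longrightarrow> single_crossing (\<lambda>t. h (t + \<delta>) - h t)"
  shows "quasi_concave h"
  unfolding quasi_concave_iff_between
proof (intro allI impI, rule ccontr)
  fix x w y
  assume "x \<le> w" "w \<le> y" "\<not> min (h x) (h y) \<le> h w"
  define c where "c = (h w + min (h x) (h y)) / 2"
  have "h w < c" "c \<le> h x" "c \<le> h y"
    using \<open>\<not> min (h x) (h y) \<le> h w\<close> by (auto simp: c_def)
  then obtain a b where ab: "a < w" "w < b" "c \<le> h a" "c \<le> h b"
    and below: "\<And>z. a < z \<Longrightarrow> z < b \<Longrightarrow> h z < c"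
    using continuous_below_level_interval[OF cont \<open>x \<le> w\<close> \<open>w \<le> y\<close>] by metis
  define d where "d = (b - a) / 2"
  have d: "0 < d" "a < a + d" "a + d + d = b" "a + d < b"
    using ab by (auto simp: d_def field_simps)
  then have "h (a + d) - h a < 0" "0 < h (a + d + d) - h (a + d)"
    using below[of "a + d"] ab by auto
  then show False
    using crossing[OF \<open>0 < d\<close>, unfolded single_crossing_def, rule_format, of a "a + d"] d by linarith
qed

section \<open>Polya frequency kernels of order two\<close>

text \<open>Polya frequency functions of order two: for nonnegative g this is log-concavity,
  i.e. total positivity of order two of the kernel (x, y) \<mapsto> g (x - y).\<close>

definition pf2 :: "(real \<Rightarrow> real) \<Rightarrow> bool" where
  "pf2 g \<longleftrightarrow> (\<forall>a b d. a \<le> b \<longrightarrow> b \<le> d \<longrightarrow> g a * g d \<le> g b * g (a + d - b))"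

text \<open>With r = g (t - p) / g (s - p), PF2 gives g (t - \<tau>) \<le> r g (s - \<tau>) for \<tau> < p and the
  reverse inequality for \<tau> > p, so the integrand at t is dominated by r times the integrand at s.\<close>

lemma convolution_pf2_nonpos_after_crossing:
  fixes g \<phi> :: "real \<Rightarrow> real"
  assumes g_nonneg: "\<And>x. 0 \<le> g x" and g_causal: "\<And>x. x < 0 \<Longrightarrow> g x = 0"
    and g_pos: "\<And>x. 0 < x \<Longrightarrow> 0 < g x" and pf2: "pf2 g"
    and before: "\<And>\<tau>. \<tau> < p \<Longrightarrow> 0 \<le> \<phi> \<tau>" and after: "\<And>\<tau>. p < \<tau> \<Longrightarrow> \<phi> \<tau> \<le> 0"
    and int: "\<And>t. integrable lborel (\<lambda>\<tau>. g (t - \<tau>) * \<phi> \<tau>)"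
    and "s < t" and neg: "convolution g \<phi> s < 0"
  shows "convolution g \<phi> t \<le> 0"
proof (cases "0 < g (s - p)")
  case True
  define r where "r = g (t - p) / g (s - p)"
  have "g (t - \<tau>) * \<phi> \<tau> \<le> r * (g (s - \<tau>) * \<phi> \<tau>)" for \<tau>
  proof (cases \<tau> p rule: linorder_cases)
    case less
    have "g (s - p) * g (t - \<tau>) \<le> g (s - \<tau>) * g (s - p + (t - \<tau>) - (s - \<tau>))"
      using less \<open>s < t\<close> by (intro pf2[unfolded pf2_def, rule_format]) auto
    then have "g (t - \<tau>) \<le> r * g (s - \<tau>)"
      using True by (simp add: r_def field_simps)
    then show ?thesis using before[OF less] by (metis mult.assoc mult_right_mono)
  next
    case greater
    have "g (s - \<tau>) * g (t - p) \<le> g (s - p) * g (s - \<tau> + (t - p) - (s - p))"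
      using greater \<open>s < t\<close> by (intro pf2[unfolded pf2_def, rule_format]) auto
    then have "r * g (s - \<tau>) \<le> g (t - \<tau>)"
      using True by (simp add: r_def field_simps)
    then show ?thesis using after[OF greater] by (metis mult.assoc mult_right_mono_neg)
  qed (use True in \<open>simp add: r_def\<close>)
  then have "convolution g \<phi> t \<le> (LINT \<tau>|lborel. r * (g (s - \<tau>) * \<phi> \<tau>))"
    unfolding convolution_def by (intro integral_mono int integrable_mult_right)
  also have "\<dots> = r * convolution g \<phi> s"
    by (simp add: convolution_def)
  also have "\<dots> \<le> 0"
    using neg g_nonneg[of "t - p"] True by (simp add: r_def mult_nonneg_nonpos divide_nonpos_pos)
  finally show ?thesis .
next
  case False
  have "g (s - p) = 0"
    using False g_nonneg[of "s - p"] by linarith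
  moreover have "s \<le> p"
    using False g_pos[of "s - p"] by (metis diff_gt_0_iff_gt linorder_not_le)
  ultimately have "g (s - \<tau>) = 0" if "p \<le> \<tau>" for \<tau>
    using that g_causal[of "s - \<tau>"] by (cases "\<tau> = p") auto
  then have "0 \<le> g (s - \<tau>) * \<phi> \<tau>" for \<tau>
    using before[of \<tau>] g_nonneg[of "s - \<tau>"] by (cases "\<tau> < p") auto
  then have "0 \<le> convolution g \<phi> s"
    by (simp add: convolution_def)
  with neg show ?thesis by simp
qed

lemma single_crossing_convolution_pf2:
  fixes g \<phi> :: "real \<Rightarrow> real"
  assumes g_nonneg: "\<And>x. 0 \<le> g x" and g_causal: "\<And>x. x < 0 \<Longrightarrow> g x = 0"
    and g_pos: "\<And>x. 0 < x \<Longrightarrow> 0 < g x" and pf2: "pf2 g"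
    and crossing: "single_crossing \<phi>" and int: "\<And>t. integrable lborel (\<lambda>\<tau>. g (t - \<tau>) * \<phi> \<tau>)"
  shows "single_crossing (convolution g \<phi>)"
  unfolding single_crossing_def
proof (intro allI impI)
  fix s t
  assume neg: "convolution g \<phi> s < 0" and "s < t"
  from crossing show "convolution g \<phi> t \<le> 0"
  proof (cases rule: single_crossing_cases)
    case 1
    then have "0 \<le> convolution g \<phi> s"
      using g_nonneg by (simp add: convolution_def)
    with neg show ?thesis by simp
  next
    case 2
    then have "0 \<le> (LINT \<tau>|lborel. - (g (t - \<tau>) * \<phi> \<tau>))"
      using g_nonneg by (intro Bochner_Integration.integral_nonneg) (simp add: mult_nonneg_nonpos)
    then show ?thesis by (simp add: convolution_def)
  next
    case (3 p)
    show ?thesis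
      by (rule convolution_pf2_nonpos_after_crossing[OF g_nonneg g_causal g_pos pf2 3 int \<open>s < t\<close> neg])
  qed
qed

lemma convolution_shift:
  fixes g u :: "real \<Rightarrow> real"
  assumes int: "\<And>t. integrable lborel (\<lambda>\<tau>. g (t - \<tau>) * u \<tau>)"
  shows "integrable lborel (\<lambda>\<tau>. g (t - \<tau>) * u (\<tau> + \<delta>))"
    and "convolution g (\<lambda>\<tau>. u (\<tau> + \<delta>)) t = convolution g u (t + \<delta>)"
proof -
  define f where "f = (\<lambda>\<sigma>. g (t + \<delta> - \<sigma>) * u \<sigma>)"
  have eq: "(\<lambda>x. f (\<delta> + 1 * x)) = (\<lambda>\<tau>. g (t - \<tau>) * u (\<tau> + \<delta>))"
    by (auto simp: f_def add.commute fun_eq_iff)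
  have "integrable lborel f" using int[of "t + \<delta>"] by (simp add: f_def)
  then show "integrable lborel (\<lambda>\<tau>. g (t - \<tau>) * u (\<tau> + \<delta>))"
    using lborel_integrable_real_affine[of f 1 \<delta>] eq by simp
  have "integral\<^sup>L lborel f = \<bar>1::real\<bar> *\<^sub>R integral\<^sup>L lborel (\<lambda>x. f (\<delta> + 1 * x))"
    by (rule lborel_integral_real_affine) simp
  then show "convolution g (\<lambda>\<tau>. u (\<tau> + \<delta>)) t = convolution g u (t + \<delta>)"
    using eq by (simp add: convolution_def f_def)
qed

lemma convolution_forward_difference:
  fixes g u :: "real \<Rightarrow> real"
  assumes int: "\<And>t. integrable lborel (\<lambda>\<tau>. g (t - \<tau>) * u \<tau>)"
  shows "integrable lborel (\<lambda>\<tau>. g (t - \<tau>) * (u (\<tau> + \<delta>) - u \<tau>))"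
    and "convolution g (\<lambda>\<tau>. u (\<tau> + \<delta>) - u \<tau>) t = convolution g u (t + \<delta>) - convolution g u t"
  using Bochner_Integration.integrable_diff[OF convolution_shift(1)[OF int] int]
    Bochner_Integration.integral_diff[OF convolution_shift(1)[OF int] int]
    convolution_shift(2)[OF int]
  by (simp_all add: convolution_def right_diff_distrib)

lemma quasi_concave_convolution_pf2:
  fixes g u :: "real \<Rightarrow> real"
  assumes g_nonneg: "\<And>x. 0 \<le> g x" and g_causal: "\<And>x. x < 0 \<Longrightarrow> g x = 0"
    and g_pos: "\<And>x. 0 < x \<Longrightarrow> 0 < g x" and pf2: "pf2 g"
    and cont: "continuous_on UNIV (convolution g u)"
    and qc: "quasi_concave u" and int: "\<And>t. integrable lborel (\<lambda>\<tau>. g (t - \<tau>) * u \<tau>)"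
  shows "quasi_concave (convolution g u)"
proof (rule quasi_concave_if_single_crossing_differences[OF cont])
  fix \<delta> :: real
  assume "0 < \<delta>"
  have "single_crossing (convolution g (\<lambda>\<tau>. u (\<tau> + \<delta>) - u \<tau>))"
    using single_crossing_forward_difference[OF qc \<open>0 < \<delta>\<close>] convolution_forward_difference(1)[OF int]
    by (intro single_crossing_convolution_pf2[OF g_nonneg g_causal g_pos pf2])
  moreover have "convolution g (\<lambda>\<tau>. u (\<tau> + \<delta>) - u \<tau>) =
      (\<lambda>t. convolution g u (t + \<delta>) - convolution g u t)"
    using convolution_forward_difference(2)[OF int] by blast
  ultimately show "single_crossing (\<lambda>t. convolution g u (t + \<delta>) - convolution g u t)"
    by simp
qed

definition strongly_unimodal_kernel :: "(real \<Rightarrow> real) \<Rightarrow> bool" where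
  "strongly_unimodal_kernel g \<longleftrightarrow>
     (\<forall>u. quasi_concave u \<and> (\<forall>t. integrable lborel (\<lambda>\<tau>. g (t - \<tau>) * u \<tau>))
          \<longrightarrow> quasi_concave (convolution g u))"

lemma strongly_unimodal_kernel_pf2:
  fixes g :: "real \<Rightarrow> real"
  assumes "\<And>x. 0 \<le> g x" "\<And>x. x < 0 \<Longrightarrow> g x = 0" "\<And>x. 0 < x \<Longrightarrow> 0 < g x" "pf2 g"
    and "\<And>u. (\<And>t. integrable lborel (\<lambda>\<tau>. g (t - \<tau>) * u \<tau>)) \<Longrightarrow> continuous_on UNIV (convolution g u)"
  shows "strongly_unimodal_kernel g"
  unfolding strongly_unimodal_kernel_def
  using quasi_concave_convolution_pf2[OF assms(1-4)] assms(5) by blast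

lemma strongly_unimodal_kernel_zero:
  assumes "\<And>x. g x = 0"
  shows "strongly_unimodal_kernel g"
  using assms by (simp add: strongly_unimodal_kernel_def quasi_concave_def convolution_def)

section \<open>Continuity of convolutions with separable kernels\<close>

lemma continuous_on_integral_atMost:
  fixes f :: "real \<Rightarrow> real"
  assumes int: "\<And>t. integrable lborel (\<lambda>\<tau>. indicator {..t} \<tau> * f \<tau>)"
  shows "continuous_on UNIV (\<lambda>t. LINT \<tau>|lborel. indicator {..t} \<tau> * f \<tau>)"
proof (rule continuous_on_sequentiallyI)
  fix x :: "nat \<Rightarrow> real" and a :: real
  assume lim: "x \<longlonglongrightarrow> a"
  define s where "s = (\<lambda>n \<tau>. indicator {..min (x n) (a + 1)} \<tau> * f \<tau>)"
  have "(\<lambda>n. integral\<^sup>L lborel (s n)) \<longlonglongrightarrow> (LINT \<tau>|lborel. indicator {..a} \<tau> * f \<tau>)"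
  proof (rule integral_dominated_convergence[where w="\<lambda>\<tau>. \<bar>indicator {..a + 1} \<tau> * f \<tau>\<bar>"])
    show "(\<lambda>\<tau>. indicator {..a} \<tau> * f \<tau>) \<in> borel_measurable lborel"
      using int[of a] by (rule borel_measurable_integrable)
    show "s n \<in> borel_measurable lborel" for n
      using int[of "min (x n) (a + 1)"] unfolding s_def by (rule borel_measurable_integrable)
    show "integrable lborel (\<lambda>\<tau>. \<bar>indicator {..a + 1} \<tau> * f \<tau>\<bar>)"
      using int[of "a + 1"] by (rule integrable_abs)
    show "AE \<tau> in lborel. norm (s n \<tau>) \<le> \<bar>indicator {..a + 1} \<tau> * f \<tau>\<bar>" for n
      by (rule AE_I2) (auto simp: s_def indicator_def abs_mult)
    show "AE \<tau> in lborel. (\<lambda>n. s n \<tau>) \<longlonglongrightarrow> indicator {..a} \<tau> * f \<tau>"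
      using AE_lborel_singleton[of a]
    proof eventually_elim
      case (elim \<tau>)
      have "eventually (\<lambda>n. s n \<tau> = indicator {..a} \<tau> * f \<tau>) sequentially"
      proof (cases "\<tau> < a")
        case True
        show ?thesis
          using order_tendstoD(1)[OF lim True] by eventually_elim (use True in \<open>auto simp: s_def\<close>)
      next
        case False
        then have "a < \<tau>" using elim by simp
        show ?thesis
          using order_tendstoD(2)[OF lim \<open>a < \<tau>\<close>] by eventually_elim (use \<open>a < \<tau>\<close> in \<open>auto simp: s_def\<close>)
      qed
      then show ?case by (rule tendsto_eventually)
    qed
  qed
  moreover have "eventually (\<lambda>n. x n < a + 1) sequentially"
    using order_tendstoD(2)[OF lim, of "a + 1"] by simp
  then have "eventually (\<lambda>n. integral\<^sup>L lborel (s n) =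
      (LINT \<tau>|lborel. indicator {..x n} \<tau> * f \<tau>)) sequentially"
    by eventually_elim (simp add: s_def)
  ultimately show "(\<lambda>n. LINT \<tau>|lborel. indicator {..x n} \<tau> * f \<tau>) \<longlonglongrightarrow>
      (LINT \<tau>|lborel. indicator {..a} \<tau> * f \<tau>)"
    by (rule Lim_transform_eventually)
qed

lemma integrable_separable_factors:
  fixes g u pa pb qa qb :: "real \<Rightarrow> real"
  assumes sep: "\<And>t \<tau>. \<tau> \<le> t \<Longrightarrow> g (t - \<tau>) = pa t * qa \<tau> + pb t * qb \<tau>"
    and det: "pa t * pb (t + 1) - pb t * pa (t + 1) \<noteq> 0"
    and int: "\<And>t. integrable lborel (\<lambda>\<tau>. g (t - \<tau>) * u \<tau>)"
  shows "integrable lborel (\<lambda>\<tau>. indicator {..t} \<tau> * (qa \<tau> * u \<tau>))"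
    and "integrable lborel (\<lambda>\<tau>. indicator {..t} \<tau> * (qb \<tau> * u \<tau>))"
proof -
  define D where "D = pa t * pb (t + 1) - pb t * pa (t + 1)"
  define G0 where "G0 = (\<lambda>\<tau>. indicator {..t} \<tau> *\<^sub>R (g (t - \<tau>) * u \<tau>))"
  define G1 where "G1 = (\<lambda>\<tau>. indicator {..t} \<tau> *\<^sub>R (g (t + 1 - \<tau>) * u \<tau>))"
  have "integrable lborel G0" "integrable lborel G1"
    unfolding G0_def G1_def by (intro integrable_mult_indicator int; simp)+
  then have "integrable lborel (\<lambda>\<tau>. (pb (t + 1) * G0 \<tau> - pb t * G1 \<tau>) / D)"
    and "integrable lborel (\<lambda>\<tau>. (pa t * G1 \<tau> - pa (t + 1) * G0 \<tau>) / D)"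
    by (intro integrable_divide Bochner_Integration.integrable_diff integrable_mult_right; simp)+
  moreover have "(pb (t + 1) * G0 \<tau> - pb t * G1 \<tau>) / D = indicator {..t} \<tau> * (qa \<tau> * u \<tau>)"
    and "(pa t * G1 \<tau> - pa (t + 1) * G0 \<tau>) / D = indicator {..t} \<tau> * (qb \<tau> * u \<tau>)" for \<tau>
    using det sep[of \<tau> t] sep[of \<tau> "t + 1"]
    by (cases "\<tau> \<le> t"; simp add: G0_def G1_def D_def field_simps)+
  ultimately show "integrable lborel (\<lambda>\<tau>. indicator {..t} \<tau> * (qa \<tau> * u \<tau>))"
    and "integrable lborel (\<lambda>\<tau>. indicator {..t} \<tau> * (qb \<tau> * u \<tau>))"
    by simp_all
qed

lemma continuous_on_convolution_separable:
  fixes g u pa pb qa qb :: "real \<Rightarrow> real"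
  assumes causal: "\<And>x. x < 0 \<Longrightarrow> g x = 0"
    and sep: "\<And>t \<tau>. \<tau> \<le> t \<Longrightarrow> g (t - \<tau>) = pa t * qa \<tau> + pb t * qb \<tau>"
    and "continuous_on UNIV pa" "continuous_on UNIV pb"
    and det: "\<And>t. pa t * pb (t + 1) - pb t * pa (t + 1) \<noteq> 0"
    and int: "\<And>t. integrable lborel (\<lambda>\<tau>. g (t - \<tau>) * u \<tau>)"
  shows "continuous_on UNIV (convolution g u)"
proof -
  have int_a: "integrable lborel (\<lambda>\<tau>. indicator {..t} \<tau> * (qa \<tau> * u \<tau>))" for t
    using sep det int by (rule integrable_separable_factors(1))
  have int_b: "integrable lborel (\<lambda>\<tau>. indicator {..t} \<tau> * (qb \<tau> * u \<tau>))" for t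
    using sep det int by (rule integrable_separable_factors(2))
  have "g (t - \<tau>) * u \<tau> =
      pa t * (indicator {..t} \<tau> * (qa \<tau> * u \<tau>)) + pb t * (indicator {..t} \<tau> * (qb \<tau> * u \<tau>))" for t \<tau>
    by (cases "\<tau> \<le> t") (auto simp: sep causal algebra_simps)
  then have "convolution g u = (\<lambda>t. pa t * (LINT \<tau>|lborel. indicator {..t} \<tau> * (qa \<tau> * u \<tau>)) +
      pb t * (LINT \<tau>|lborel. indicator {..t} \<tau> * (qb \<tau> * u \<tau>)))"
    using int_a int_b by (simp add: convolution_def fun_eq_iff)
  then show ?thesis
    using assms(3,4) int_a int_b by (simp add: continuous_on_integral_atMost continuous_intros)
qed

lemma pf2_causalI:
  fixes g :: "real \<Rightarrow> real"
  assumes g_nonneg: "\<And>x. 0 \<le> g x" and causal: "\<And>x. x < 0 \<Longrightarrow> g x = 0"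
    and pf2_pos: "\<And>a b d. 0 \<le> a \<Longrightarrow> a \<le> b \<Longrightarrow> b \<le> d \<Longrightarrow> g a * g d \<le> g b * g (a + d - b)"
  shows "pf2 g"
  unfolding pf2_def
proof (intro allI impI)
  fix a b d :: real
  assume "a \<le> b" "b \<le> d"
  then show "g a * g d \<le> g b * g (a + d - b)"
    using pf2_pos[of a b d] causal[of a] g_nonneg[of b] g_nonneg[of "a + d - b"] by (cases "a < 0") auto
qed

lemma pf2_exp_linear:
  fixes g :: "real \<Rightarrow> real"
  assumes causal: "\<And>x. x < 0 \<Longrightarrow> g x = 0"
    and g_eq: "\<And>x. 0 \<le> x \<Longrightarrow> g x = (\<alpha> + \<beta> * x) * exp (l * x)" and g_nonneg: "\<And>x. 0 \<le> g x"
  shows "pf2 g"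
proof (rule pf2_causalI[OF g_nonneg causal])
  fix a b d :: real
  assume "0 \<le> a" "a \<le> b" "b \<le> d"
  have "(\<alpha> + \<beta> * b) * (\<alpha> + \<beta> * (a + d - b)) - (\<alpha> + \<beta> * a) * (\<alpha> + \<beta> * d) = \<beta>\<^sup>2 * ((b - a) * (d - b))"
    by (simp add: algebra_simps power2_eq_square)
  also have "\<dots> \<ge> 0" using \<open>a \<le> b\<close> \<open>b \<le> d\<close> by simp
  finally have "(\<alpha> + \<beta> * a) * (\<alpha> + \<beta> * d) * exp (l * (a + d)) \<le>
      (\<alpha> + \<beta> * b) * (\<alpha> + \<beta> * (a + d - b)) * exp (l * (a + d))"
    by (intro mult_right_mono) auto
  then show "g a * g d \<le> g b * g (a + d - b)"
    using \<open>0 \<le> a\<close> \<open>a \<le> b\<close> \<open>b \<le> d\<close> by (simp add: g_eq algebra_simps flip: exp_add)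
qed

lemma exp_add_exp_le_outer:
  fixes x1 x2 x3 x4 :: real
  assumes "x1 \<le> x2" "x2 \<le> x4" "x1 + x4 = x2 + x3"
  shows "exp x2 + exp x3 \<le> exp x1 + exp x4"
proof -
  have "exp x1 + exp x4 - exp x2 - exp x3 = (exp (x2 - x1) - 1) * (exp x3 - exp x1)"
    using assms(3) by (simp add: algebra_simps flip: exp_add exp_diff)
  moreover have "0 \<le> exp (x2 - x1) - 1" "0 \<le> exp x3 - exp x1"
    using assms by auto
  ultimately show ?thesis by (smt (verit) mult_nonneg_nonneg)
qed

lemma pf2_two_exp:
  fixes g :: "real \<Rightarrow> real"
  assumes causal: "\<And>x. x < 0 \<Longrightarrow> g x = 0"
    and g_eq: "\<And>x. 0 \<le> x \<Longrightarrow> g x = \<alpha> * exp (l1 * x) + \<beta> * exp (l2 * x)"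
    and g_nonneg: "\<And>x. 0 \<le> g x" and "\<alpha> * \<beta> \<le> 0" and "l2 \<le> l1"
  shows "pf2 g"
proof (rule pf2_causalI[OF g_nonneg causal])
  fix a b d :: real
  assume "0 \<le> a" "a \<le> b" "b \<le> d"
  define c where "c = a + d - b"
  have "exp (l1 * b + l2 * c) + exp (l2 * b + l1 * c) \<le> exp (l1 * a + l2 * d) + exp (l2 * a + l1 * d)"
  proof (rule exp_add_exp_le_outer)
    show "l1 * a + l2 * d \<le> l1 * b + l2 * c"
      using mult_right_mono[OF \<open>l2 \<le> l1\<close>, of "b - a"] \<open>a \<le> b\<close> by (simp add: c_def algebra_simps)
    show "l1 * b + l2 * c \<le> l2 * a + l1 * d"
      using mult_right_mono[OF \<open>l2 \<le> l1\<close>, of "d - b"] \<open>b \<le> d\<close> by (simp add: c_def algebra_simps)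
  qed (simp add: c_def algebra_simps)
  then have "\<alpha> * \<beta> * (exp (l1 * a + l2 * d) + exp (l2 * a + l1 * d)) \<le>
      \<alpha> * \<beta> * (exp (l1 * b + l2 * c) + exp (l2 * b + l1 * c))"
    using \<open>\<alpha> * \<beta> \<le> 0\<close> by (rule mult_left_mono_neg)
  moreover have "g a * g d = \<alpha>\<^sup>2 * exp (l1 * (a + d)) + \<beta>\<^sup>2 * exp (l2 * (a + d)) +
      \<alpha> * \<beta> * (exp (l1 * a + l2 * d) + exp (l2 * a + l1 * d))"
    and "g b * g c = \<alpha>\<^sup>2 * exp (l1 * (a + d)) + \<beta>\<^sup>2 * exp (l2 * (a + d)) +
      \<alpha> * \<beta> * (exp (l1 * b + l2 * c) + exp (l2 * b + l1 * c))"
    using \<open>0 \<le> a\<close> \<open>a \<le> b\<close> \<open>b \<le> d\<close>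
    by (simp_all add: g_eq c_def algebra_simps power2_eq_square flip: exp_add)
  ultimately show "g a * g d \<le> g b * g (a + d - b)"
    by (simp add: c_def)
qed

lemma strongly_unimodal_exp:
  fixes g :: "real \<Rightarrow> real"
  assumes causal: "\<And>x. x < 0 \<Longrightarrow> g x = 0"
    and g_eq: "\<And>x. 0 \<le> x \<Longrightarrow> g x = a * exp (l * x)" and "0 < a"
  shows "strongly_unimodal_kernel g"
proof -
  have g_nonneg: "0 \<le> g x" for x
    using \<open>0 < a\<close> by (cases "x < 0") (simp_all add: causal g_eq)
  have "\<And>x. 0 \<le> x \<Longrightarrow> g x = (a + 0 * x) * exp (l * x)"
    using g_eq by simp
  from pf2_exp_linear[OF causal this g_nonneg] have "pf2 g" .
  moreover have "0 < g x" if "0 < x" for x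
    using that \<open>0 < a\<close> by (simp add: g_eq)
  ultimately show ?thesis
  proof (intro strongly_unimodal_kernel_pf2[OF g_nonneg causal])
    fix u
    assume int: "\<And>t. integrable lborel (\<lambda>\<tau>. g (t - \<tau>) * u \<tau>)"
    txt \<open>The second term vanishes; its factor t exp (l t) only serves to make the system
      that recovers the first factor from g (t - \<tau>) and g (t + 1 - \<tau>) regular.\<close>
    have sep: "g (t - \<tau>) = a * exp (l * t) * exp (- l * \<tau>) + t * exp (l * t) * 0" if "\<tau> \<le> t" for t \<tau>
      using that by (simp add: g_eq algebra_simps flip: exp_add)
    have det: "a * exp (l * t) * ((t + 1) * exp (l * (t + 1))) -
        t * exp (l * t) * (a * exp (l * (t + 1))) \<noteq> 0" for t
      using \<open>0 < a\<close> by (simp add: algebra_simps)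
    have "continuous_on UNIV (\<lambda>t. a * exp (l * t))" "continuous_on UNIV (\<lambda>t. t * exp (l * t))"
      by (intro continuous_intros)+
    with causal sep show "continuous_on UNIV (convolution g u)"
      using det int by (rule continuous_on_convolution_separable)
  qed
qed

lemma strongly_unimodal_exp_linear:
  fixes g :: "real \<Rightarrow> real"
  assumes causal: "\<And>x. x < 0 \<Longrightarrow> g x = 0"
    and g_eq: "\<And>x. 0 \<le> x \<Longrightarrow> g x = (\<alpha> + \<beta> * x) * exp (l * x)" and "0 \<le> \<alpha>" "0 < \<beta>"
  shows "strongly_unimodal_kernel g"
proof -
  have g_pos: "0 < g x" if "0 < x" for x
    using that assms(3,4) by (simp add: g_eq add_nonneg_pos)
  have g_nonneg: "0 \<le> g x" for x
    using causal[of x] g_eq[of 0] g_pos[of x] \<open>0 \<le> \<alpha>\<close> by (cases x "0::real" rule: linorder_cases) auto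
  show ?thesis
  proof (rule strongly_unimodal_kernel_pf2[OF g_nonneg causal g_pos
        pf2_exp_linear[OF causal g_eq g_nonneg]])
    fix u
    assume int: "\<And>t. integrable lborel (\<lambda>\<tau>. g (t - \<tau>) * u \<tau>)"
    have sep: "g (t - \<tau>) =
        (\<alpha> + \<beta> * t) * exp (l * t) * exp (- l * \<tau>) + (- \<beta> * exp (l * t)) * (\<tau> * exp (- l * \<tau>))"
      if "\<tau> \<le> t" for t \<tau>
      using that by (simp add: g_eq algebra_simps flip: exp_add)
    have det: "(\<alpha> + \<beta> * t) * exp (l * t) * (- \<beta> * exp (l * (t + 1))) -
        (- \<beta> * exp (l * t)) * ((\<alpha> + \<beta> * (t + 1)) * exp (l * (t + 1))) \<noteq> 0" for t
      using \<open>0 < \<beta>\<close> by (simp add: algebra_simps)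
    have "continuous_on UNIV (\<lambda>t. (\<alpha> + \<beta> * t) * exp (l * t))" "continuous_on UNIV (\<lambda>t. - \<beta> * exp (l * t))"
      by (intro continuous_intros)+
    with causal sep show "continuous_on UNIV (convolution g u)"
      using det int by (rule continuous_on_convolution_separable)
  qed
qed

lemma strongly_unimodal_two_exp:
  fixes g :: "real \<Rightarrow> real"
  assumes causal: "\<And>x. x < 0 \<Longrightarrow> g x = 0"
    and g_eq: "\<And>x. 0 \<le> x \<Longrightarrow> g x = \<alpha> * exp (l1 * x) + \<beta> * exp (l2 * x)"
    and "0 < \<alpha>" "\<beta> < 0" "0 \<le> \<alpha> + \<beta>" "l2 < l1"
  shows "strongly_unimodal_kernel g"
proof -
  have g_pos: "0 < g x" if "0 < x" for x
  proof -
    have "- \<beta> * exp (l2 * x) < - \<beta> * exp (l1 * x)"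
      using that \<open>\<beta> < 0\<close> \<open>l2 < l1\<close> by simp
    also have "\<dots> \<le> \<alpha> * exp (l1 * x)"
      using \<open>0 \<le> \<alpha> + \<beta>\<close> by (intro mult_right_mono) auto
    finally show ?thesis using that by (simp add: g_eq)
  qed
  have g_nonneg: "0 \<le> g x" for x
    using causal[of x] g_eq[of 0] g_pos[of x] \<open>0 \<le> \<alpha> + \<beta>\<close> by (cases x "0::real" rule: linorder_cases) auto
  have "pf2 g"
    using \<open>0 < \<alpha>\<close> \<open>\<beta> < 0\<close> \<open>l2 < l1\<close>
    by (intro pf2_two_exp[OF causal g_eq g_nonneg]) (simp_all add: mult_pos_neg less_imp_le)
  then show ?thesis
  proof (intro strongly_unimodal_kernel_pf2[OF g_nonneg causal g_pos])
    fix u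
    assume int: "\<And>t. integrable lborel (\<lambda>\<tau>. g (t - \<tau>) * u \<tau>)"
    have sep: "g (t - \<tau>) = \<alpha> * exp (l1 * t) * exp (- l1 * \<tau>) + \<beta> * exp (l2 * t) * exp (- l2 * \<tau>)"
      if "\<tau> \<le> t" for t \<tau>
      using that by (simp add: g_eq algebra_simps flip: exp_add)
    have det: "\<alpha> * exp (l1 * t) * (\<beta> * exp (l2 * (t + 1))) -
        \<beta> * exp (l2 * t) * (\<alpha> * exp (l1 * (t + 1))) \<noteq> 0" for t
    proof -
      have "\<alpha> * exp (l1 * t) * (\<beta> * exp (l2 * (t + 1))) - \<beta> * exp (l2 * t) * (\<alpha> * exp (l1 * (t + 1)))
          = \<alpha> * \<beta> * exp (l1 * t) * exp (l2 * t) * (exp l2 - exp l1)"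
        by (simp add: algebra_simps flip: exp_add)
      then show ?thesis using \<open>0 < \<alpha>\<close> \<open>\<beta> < 0\<close> \<open>l2 < l1\<close> by simp
    qed
    have "continuous_on UNIV (\<lambda>t. \<alpha> * exp (l1 * t))" "continuous_on UNIV (\<lambda>t. \<beta> * exp (l2 * t))"
      by (intro continuous_intros)+
    with causal sep show "continuous_on UNIV (convolution g u)"
      using det int by (rule continuous_on_convolution_separable)
  qed
qed

section \<open>Kernels that are not strongly unimodal\<close>

lemma quasi_concave_indicator_Icc: "quasi_concave (indicator {a..b} :: real \<Rightarrow> real)"
  unfolding quasi_concave_iff_between by (auto simp: indicator_def)

lemma quasi_concave_step_plus_pulse:
  assumes "0 \<le> k"
  shows "quasi_concave (\<lambda>\<tau>::real. k * indicator {0..} \<tau> + indicator {0..1} \<tau> :: real)"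
    (is "quasi_concave ?u")
  unfolding quasi_concave_iff_between
proof (intro allI impI)
  fix x w y :: real
  assume "x \<le> w" "w \<le> y"
  consider "x < 0" | "0 \<le> w" "1 < y" | "0 \<le> w" "y \<le> 1"
    using \<open>x \<le> w\<close> by linarith
  then show "min (?u x) (?u y) \<le> ?u w"
  proof cases
    case 1
    then show ?thesis using \<open>0 \<le> k\<close> by (simp add: min.coboundedI1)
  next
    case 2
    then show ?thesis by (simp add: min.coboundedI2)
  next
    case 3
    with \<open>w \<le> y\<close> have "?u w = k + 1" by simp
    moreover have "?u x \<le> k + 1" using \<open>0 \<le> k\<close> by (simp add: indicator_def)
    ultimately show ?thesis by (simp add: min.coboundedI1)
  qed
qed

lemma integrable_causal_kernel_indicator:
  fixes g :: "real \<Rightarrow> real"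
  assumes causal: "\<And>x. x < 0 \<Longrightarrow> g x = 0" and cont: "continuous_on {0..} g"
    and "closed S" "S \<subseteq> {a..}"
  shows "integrable lborel (\<lambda>\<tau>. g (t - \<tau>) * indicator S \<tau>)"
proof -
  define G where "G = (\<lambda>x. g (max x 0))"
  have "continuous_on UNIV G"
    unfolding G_def by (rule continuous_on_compose2[OF cont]) (auto intro!: continuous_intros)
  have "compact (S \<inter> {a..t})"
    using \<open>closed S\<close> by (intro closed_Int_compact) auto
  moreover have "continuous_on (S \<inter> {a..t}) (\<lambda>\<tau>. G (t - \<tau>))"
    by (rule continuous_on_compose2[OF \<open>continuous_on UNIV G\<close>]) (auto intro!: continuous_intros)
  ultimately have "integrable lborel (\<lambda>\<tau>. indicator (S \<inter> {a..t}) \<tau> *\<^sub>R G (t - \<tau>))"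
    by (intro borel_integrable_compact)
  moreover have "indicator (S \<inter> {a..t}) \<tau> *\<^sub>R G (t - \<tau>) = g (t - \<tau>) * indicator S \<tau>" for \<tau>
    using \<open>S \<subseteq> {a..}\<close> by (cases "\<tau> \<le> t") (auto simp: G_def causal indicator_def)
  ultimately show ?thesis by simp
qed

lemma integrable_pulse:
  fixes M \<epsilon> :: real
  shows "integrable lborel (\<lambda>\<tau>::real. indicator {0..\<epsilon>} \<tau> * M)"
  by (intro integrable_mult_left) (auto intro!: integrable_real_indicator simp: emeasure_lborel_Icc_eq)

lemma integral_pulse:
  fixes M \<epsilon> :: real
  assumes "0 \<le> \<epsilon>"
  shows "(LINT \<tau>|lborel. indicator {0..\<epsilon>} \<tau> * M) = \<epsilon> * M"
  using assms integrable_pulse[of \<epsilon> 1] by simp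

lemma convolution_pulse_le:
  fixes g :: "real \<Rightarrow> real"
  assumes "0 < \<epsilon>" and int: "integrable lborel (\<lambda>\<tau>. g (t - \<tau>) * indicator {0..\<epsilon>} \<tau>)"
    and bound: "\<And>\<tau>. 0 \<le> \<tau> \<Longrightarrow> \<tau> \<le> \<epsilon> \<Longrightarrow> g (t - \<tau>) \<le> M"
  shows "convolution g (indicator {0..\<epsilon>}) t \<le> \<epsilon> * M"
proof -
  have "convolution g (indicator {0..\<epsilon>}) t \<le> (LINT \<tau>|lborel. indicator {0..\<epsilon>} \<tau> * M)"
    unfolding convolution_def
    by (rule integral_mono[OF int integrable_pulse]) (use bound in \<open>auto simp: indicator_def\<close>)
  also have "\<dots> = \<epsilon> * M"
    using \<open>0 < \<epsilon>\<close> by (intro integral_pulse) simp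
  finally show ?thesis .
qed

lemma convolution_pulse_ge:
  fixes g :: "real \<Rightarrow> real"
  assumes "0 < \<epsilon>" and int: "integrable lborel (\<lambda>\<tau>. g (t - \<tau>) * indicator {0..\<epsilon>} \<tau>)"
    and bound: "\<And>\<tau>. 0 \<le> \<tau> \<Longrightarrow> \<tau> \<le> \<epsilon> \<Longrightarrow> M \<le> g (t - \<tau>)"
  shows "\<epsilon> * M \<le> convolution g (indicator {0..\<epsilon>}) t"
proof -
  have "\<epsilon> * M = (LINT \<tau>|lborel. indicator {0..\<epsilon>} \<tau> * M)"
    using \<open>0 < \<epsilon>\<close> by (intro integral_pulse[symmetric]) simp
  also have "\<dots> \<le> convolution g (indicator {0..\<epsilon>}) t"
    unfolding convolution_def
    by (rule integral_mono[OF integrable_pulse int]) (use bound in \<open>auto simp: indicator_def\<close>)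
  finally show ?thesis .
qed

text \<open>A negative value of g at t1 survives convolution with a short pulse, while the response
  is zero before the pulse and only slightly negative long after it.\<close>

lemma nonneg_if_strongly_unimodal_kernel:
  fixes g :: "real \<Rightarrow> real"
  assumes su: "strongly_unimodal_kernel g" and causal: "\<And>x. x < 0 \<Longrightarrow> g x = 0"
    and cont: "continuous_on {0..} g" and lim: "(g \<longlongrightarrow> 0) at_top"
  shows "0 \<le> g t\<^sub>1"
proof (rule ccontr)
  assume "\<not> 0 \<le> g t\<^sub>1"
  define v where "v = g t\<^sub>1"
  have "v < 0" "0 \<le> t\<^sub>1"
    using \<open>\<not> 0 \<le> g t\<^sub>1\<close> causal[of t\<^sub>1] by (auto simp: v_def not_less)
  obtain e where "0 < e" and near: "\<And>x. 0 \<le> x \<Longrightarrow> dist x t\<^sub>1 < e \<Longrightarrow> dist (g x) v < - v / 2"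
    using cont \<open>0 \<le> t\<^sub>1\<close> \<open>v < 0\<close> unfolding continuous_on_iff v_def
    by (metis atLeast_iff neg_0_less_iff_less half_gt_zero)
  define \<epsilon> where "\<epsilon> = e / 2"
  have "0 < \<epsilon>" using \<open>0 < e\<close> by (simp add: \<epsilon>_def)
  obtain X where far: "\<And>x. X \<le> x \<Longrightarrow> v / 4 < g x"
    using order_tendstoD(1)[OF lim, of "v / 4"] \<open>v < 0\<close> by (auto simp: eventually_at_top_linorder)
  define T where "T = max X (t\<^sub>1 + \<epsilon>) + \<epsilon> + 1"
  define h where "h = convolution g (indicator {0..\<epsilon>})"
  have int: "integrable lborel (\<lambda>\<tau>. g (t - \<tau>) * indicator {0..\<epsilon>} \<tau>)" for t
    by (rule integrable_causal_kernel_indicator[OF causal cont, of _ 0]) auto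
  have "(\<lambda>\<tau>. g (-1 - \<tau>) * indicator {0..\<epsilon>} \<tau>) = (\<lambda>\<tau>. 0)"
    by (rule ext) (simp add: causal indicator_def)
  then have "h (-1) = 0"
    by (simp add: h_def convolution_def)
  moreover have "h (t\<^sub>1 + \<epsilon>) \<le> \<epsilon> * (v / 2)"
    unfolding h_def
  proof (rule convolution_pulse_le[OF _ int])
    fix \<tau> assume "0 \<le> \<tau>" "\<tau> \<le> \<epsilon>"
    then show "g (t\<^sub>1 + \<epsilon> - \<tau>) \<le> v / 2"
      using near[of "t\<^sub>1 + \<epsilon> - \<tau>"] \<open>0 \<le> t\<^sub>1\<close> \<open>0 < e\<close> by (auto simp: \<epsilon>_def dist_real_def)
  qed (rule \<open>0 < \<epsilon>\<close>)
  moreover have "\<epsilon> * (v / 4) \<le> h T"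
    unfolding h_def
  proof (rule convolution_pulse_ge[OF \<open>0 < \<epsilon>\<close> int])
    fix \<tau> assume "0 \<le> \<tau>" "\<tau> \<le> \<epsilon>"
    then have "X \<le> T - \<tau>" by (simp add: T_def max_def)
    then show "v / 4 \<le> g (T - \<tau>)" using far by (simp add: less_imp_le)
  qed
  moreover have "quasi_concave h"
    unfolding h_def using quasi_concave_indicator_Icc int
    by (intro su[unfolded strongly_unimodal_kernel_def, rule_format]) simp
  then have "min (h (-1)) (h T) \<le> h (t\<^sub>1 + \<epsilon>)"
    using \<open>0 \<le> t\<^sub>1\<close> \<open>0 < \<epsilon>\<close>
    by (intro quasi_concave_iff_between[THEN iffD1, rule_format]) (auto simp: T_def)
  moreover have "\<epsilon> * (v / 2) < \<epsilon> * (v / 4)" "\<epsilon> * (v / 4) < 0"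
    using \<open>0 < \<epsilon>\<close> \<open>v < 0\<close> by (simp_all add: mult_pos_neg)
  ultimately show False
    by (smt (verit))
qed

lemma tendsto_exp_neg_at_top:
  fixes l :: real
  assumes "l < 0"
  shows "((\<lambda>t. exp (l * t)) \<longlongrightarrow> 0) at_top"
proof -
  have "filterlim (\<lambda>t. l * t) at_bot at_top"
    by (rule filterlim_tendsto_neg_mult_at_bot[OF tendsto_const assms filterlim_ident])
  then show ?thesis by (rule filterlim_compose[OF exp_at_bot])
qed

lemma integral_indicator_exp_affine:
  fixes a b t l :: real
  assumes "a \<le> b" "l \<noteq> 0"
  shows "(LINT x|lborel. indicator {a..b} x * exp (l * (t - x))) =
    (exp (l * (t - a)) - exp (l * (t - b))) / l"
proof -
  have "(LINT x|lborel. indicator {a..b} x *\<^sub>R exp (l * (t - x))) =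
      - exp (l * (t - b)) / l - - exp (l * (t - a)) / l"
  proof (rule integral_FTC_atLeastAtMost[OF \<open>a \<le> b\<close>])
    fix x
    have "((\<lambda>x. - exp (l * (t - x)) / l) has_real_derivative
        (- (exp (l * (t - x)) * (l * (0 - 1))) / l)) (at x within {a..b})"
      using \<open>l \<noteq> 0\<close> by (intro derivative_eq_intros) auto
    then show "((\<lambda>x. - exp (l * (t - x)) / l) has_vector_derivative exp (l * (t - x)))
        (at x within {a..b})"
      using \<open>l \<noteq> 0\<close> by (simp add: has_real_derivative_iff_has_vector_derivative[symmetric])
  qed (intro continuous_intros)
  then show ?thesis by (simp add: diff_divide_distrib)
qed

lemma not_quasi_concave_two_exp_tail:
  fixes f :: "real \<Rightarrow> real"
  assumes f_eq: "\<And>t. 1 \<le> t \<Longrightarrow> f t = C + (c * exp (l1 * t) + d * exp (l2 * t))"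
    and "c < 0" "l2 < l1" "l1 < 0" and start: "0 < c * exp l1 + d * exp l2"
  shows "\<not> quasi_concave f"
proof
  assume qc: "quasi_concave f"
  define \<phi> where "\<phi> = (\<lambda>t. c * exp (l1 * t) + d * exp (l2 * t))"
  have \<phi>_factor: "\<phi> t = exp (l1 * t) * (c + d * exp ((l2 - l1) * t))" for t
    by (simp add: \<phi>_def algebra_simps flip: exp_add)
  have "((\<lambda>t. c + d * exp ((l2 - l1) * t)) \<longlongrightarrow> c + d * 0) at_top"
    using \<open>l2 < l1\<close> by (intro tendsto_intros tendsto_exp_neg_at_top) simp
  then have "eventually (\<lambda>t. c + d * exp ((l2 - l1) * t) < 0) at_top"
    using \<open>c < 0\<close> by (intro order_tendstoD(2)) simp_all
  then have "eventually (\<lambda>t. 1 \<le> t \<and> \<phi> t < 0) at_top"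
    using eventually_ge_at_top[of 1] by eventually_elim (simp add: \<phi>_factor mult_pos_neg)
  then obtain y where "1 \<le> y" "\<phi> y < 0"
    by (auto simp: eventually_at_top_linorder)
  have "(\<phi> \<longlongrightarrow> c * 0 + d * 0) at_top"
    unfolding \<phi>_def using \<open>l2 < l1\<close> \<open>l1 < 0\<close> by (intro tendsto_intros tendsto_exp_neg_at_top) simp_all
  then have "eventually (\<lambda>z. \<phi> y < \<phi> z) at_top"
    using \<open>\<phi> y < 0\<close> by (intro order_tendstoD(1)) simp_all
  then have "eventually (\<lambda>z. y \<le> z \<and> \<phi> y < \<phi> z) at_top"
    by (rule eventually_conj[OF eventually_ge_at_top])
  then obtain z where "y \<le> z" "\<phi> y < \<phi> z"
    by (auto simp: eventually_at_top_linorder)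
  have "min (f 1) (f z) \<le> f y"
    using qc \<open>1 \<le> y\<close> \<open>y \<le> z\<close> by (simp add: quasi_concave_iff_between)
  moreover have "f 1 = C + \<phi> 1" "f y = C + \<phi> y" "f z = C + \<phi> z"
    using f_eq \<open>1 \<le> y\<close> \<open>y \<le> z\<close> by (simp_all add: \<phi>_def)
  ultimately show False
    using start \<open>\<phi> y < 0\<close> \<open>\<phi> y < \<phi> z\<close> by (simp add: \<phi>_def min_def split: if_splits)
qed

lemma convolution_step_plus_pulse_two_exp:
  fixes g :: "real \<Rightarrow> real"
  assumes causal: "\<And>x. x < 0 \<Longrightarrow> g x = 0"
    and g_eq: "\<And>x. 0 \<le> x \<Longrightarrow> g x = \<alpha> * exp (l1 * x) + \<beta> * exp (l2 * x)"
    and "l1 \<noteq> 0" "l2 \<noteq> 0" "1 \<le> t"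
  shows "convolution g (\<lambda>\<tau>. k * indicator {0..} \<tau> + indicator {0..1} \<tau>) t =
    - k * (\<alpha> / l1 + \<beta> / l2) + (\<alpha> * (k + 1 - exp (- l1)) / l1 * exp (l1 * t)
      + \<beta> * (k + 1 - exp (- l2)) / l2 * exp (l2 * t))"
proof -
  define G where "G = (\<lambda>x. \<alpha> * exp (l1 * x) + \<beta> * exp (l2 * x))"
  have integral_G: "(LINT \<tau>|lborel. indicator {a..b} \<tau> * G (t - \<tau>)) =
      \<alpha> * ((exp (l1 * (t - a)) - exp (l1 * (t - b))) / l1) +
      \<beta> * ((exp (l2 * (t - a)) - exp (l2 * (t - b))) / l2)"
    if "a \<le> b" for a b
  proof -
    have int: "integrable lborel (\<lambda>\<tau>. indicator {a..b} \<tau> * exp (l * (t - \<tau>)))" for l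
      using borel_integrable_compact[of "{a..b}" "\<lambda>\<tau>. exp (l * (t - \<tau>))"]
      by (simp add: continuous_intros)
    have "(LINT \<tau>|lborel. indicator {a..b} \<tau> * G (t - \<tau>)) =
        (LINT \<tau>|lborel. \<alpha> * (indicator {a..b} \<tau> * exp (l1 * (t - \<tau>))) +
          \<beta> * (indicator {a..b} \<tau> * exp (l2 * (t - \<tau>))))"
      by (simp add: G_def algebra_simps)
    also have "\<dots> = \<alpha> * (LINT \<tau>|lborel. indicator {a..b} \<tau> * exp (l1 * (t - \<tau>))) +
        \<beta> * (LINT \<tau>|lborel. indicator {a..b} \<tau> * exp (l2 * (t - \<tau>)))"
      using int by simp
    finally show ?thesis
      using that \<open>l1 \<noteq> 0\<close> \<open>l2 \<noteq> 0\<close> by (simp add: integral_indicator_exp_affine)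
  qed
  have int_G: "integrable lborel (\<lambda>\<tau>. indicator {a..b} \<tau> * G (t - \<tau>))" for a b
    using borel_integrable_compact[of "{a..b}" "\<lambda>\<tau>. G (t - \<tau>)"] by (simp add: G_def continuous_intros)
  have "g (t - \<tau>) * (k * indicator {0..} \<tau> + indicator {0..1} \<tau>) =
      k * (indicator {0..t} \<tau> * G (t - \<tau>)) + indicator {0..1} \<tau> * G (t - \<tau>)" for \<tau>
    using \<open>1 \<le> t\<close> by (cases "0 \<le> \<tau>"; cases "\<tau> \<le> 1"; cases "\<tau> \<le> t")
      (auto simp: causal g_eq G_def indicator_def algebra_simps)
  then have "convolution g (\<lambda>\<tau>. k * indicator {0..} \<tau> + indicator {0..1} \<tau>) t =
      k * (LINT \<tau>|lborel. indicator {0..t} \<tau> * G (t - \<tau>)) +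
      (LINT \<tau>|lborel. indicator {0..1} \<tau> * G (t - \<tau>))"
    using int_G by (simp add: convolution_def)
  also have "\<dots> = k * (\<alpha> * ((exp (l1 * t) - 1) / l1) + \<beta> * ((exp (l2 * t) - 1) / l2)) +
      (\<alpha> * ((exp (l1 * t) - exp (l1 * (t - 1))) / l1) + \<beta> * ((exp (l2 * t) - exp (l2 * (t - 1))) / l2))"
    using \<open>1 \<le> t\<close> by (simp add: integral_G)
  also have "\<dots> = - k * (\<alpha> / l1 + \<beta> / l2) + (\<alpha> * (k + 1 - exp (- l1)) / l1 * exp (l1 * t)
      + \<beta> * (k + 1 - exp (- l2)) / l2 * exp (l2 * t))"
    using \<open>l1 \<noteq> 0\<close> \<open>l2 \<noteq> 0\<close> by (simp add: right_diff_distrib exp_diff exp_minus field_simps)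
  finally show ?thesis .
qed

text \<open>The step height k lies just above exp (- l1) - 1, so that for t \<ge> 1 the response to the step
  plus pulse is C + c exp (l1 t) + d exp (l2 t) with c < 0 < c exp l1 + d exp l2.\<close>

lemma two_exp_step_height:
  fixes \<alpha> \<beta> l1 l2 :: real
  assumes "0 < \<alpha>" "0 < \<beta>" "l2 < l1" "l1 < 0"
  obtains k where "0 \<le> k" "\<alpha> * (k + 1 - exp (- l1)) / l1 < 0"
    "0 < \<alpha> * (k + 1 - exp (- l1)) / l1 * exp l1 + \<beta> * (k + 1 - exp (- l2)) / l2 * exp l2"
proof
  have "l2 < 0" using assms by simp
  define a1 where "a1 = exp (- l1) - 1"
  define a2 where "a2 = exp (- l2) - 1"
  define A where "A = \<alpha> * exp l1 / (- l1)"
  define B where "B = \<beta> * exp l2 / (- l2)"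
  define k where "k = a1 + B * (a2 - a1) / (2 * (A + B))"
  have "0 < a1" "a1 < a2"
    using assms by (auto simp: a1_def a2_def)
  have "0 < A" "0 < B"
    using assms \<open>l2 < 0\<close> by (auto simp: A_def B_def intro!: divide_pos_neg)
  then have "a1 < k"
    using \<open>a1 < a2\<close> by (simp add: k_def)
  then show "0 \<le> k" using \<open>0 < a1\<close> by simp
  have "k + 1 - exp (- l1) = k - a1" by (simp add: a1_def)
  then show "\<alpha> * (k + 1 - exp (- l1)) / l1 < 0"
    using \<open>0 < \<alpha>\<close> \<open>a1 < k\<close> \<open>l1 < 0\<close> by (simp add: divide_pos_neg)
  have "\<alpha> * (k + 1 - exp (- l1)) / l1 * exp l1 + \<beta> * (k + 1 - exp (- l2)) / l2 * exp l2 =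
      B * (a2 - a1) - (A + B) * (k - a1)"
    using \<open>l1 < 0\<close> \<open>l2 < 0\<close> by (simp add: A_def B_def a1_def a2_def field_simps)
  also have "(A + B) * (k - a1) = B * (a2 - a1) / 2"
  proof -
    have "2 * A + 2 * B \<noteq> 0" using \<open>0 < A\<close> \<open>0 < B\<close> by simp
    then show ?thesis by (simp add: k_def field_simps)
  qed
  also have "B * (a2 - a1) - B * (a2 - a1) / 2 > 0"
    using \<open>0 < B\<close> \<open>a1 < a2\<close> by simp
  finally show "0 < \<alpha> * (k + 1 - exp (- l1)) / l1 * exp l1 + \<beta> * (k + 1 - exp (- l2)) / l2 * exp l2" .
qed

lemma not_strongly_unimodal_two_exp:
  fixes g :: "real \<Rightarrow> real"
  assumes causal: "\<And>x. x < 0 \<Longrightarrow> g x = 0"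
    and g_eq: "\<And>x. 0 \<le> x \<Longrightarrow> g x = \<alpha> * exp (l1 * x) + \<beta> * exp (l2 * x)"
    and "0 < \<alpha>" "0 < \<beta>" "l2 < l1" "l1 < 0"
  shows "\<not> strongly_unimodal_kernel g"
proof
  assume su: "strongly_unimodal_kernel g"
  obtain k where "0 \<le> k" and c_neg: "\<alpha> * (k + 1 - exp (- l1)) / l1 < 0"
    and start: "0 < \<alpha> * (k + 1 - exp (- l1)) / l1 * exp l1 + \<beta> * (k + 1 - exp (- l2)) / l2 * exp l2"
    using two_exp_step_height[OF assms(3-6)] by blast
  define u where "u = (\<lambda>\<tau>::real. k * indicator {0..} \<tau> + indicator {0..1} \<tau> :: real)"
  have "continuous_on {0..} (\<lambda>x. \<alpha> * exp (l1 * x) + \<beta> * exp (l2 * x))"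
    by (intro continuous_intros)
  then have cont: "continuous_on {0..} g"
    by (rule continuous_on_cong[THEN iffD1, rotated 2]) (auto simp: g_eq)
  have "integrable lborel (\<lambda>\<tau>. k * (g (t - \<tau>) * indicator {0..} \<tau>) + g (t - \<tau>) * indicator {0..1} \<tau>)"
    for t
    using integrable_causal_kernel_indicator[OF causal cont, of "{0..}" 0]
      integrable_causal_kernel_indicator[OF causal cont, of "{0..1}" 0]
    by simp
  then have "integrable lborel (\<lambda>\<tau>. g (t - \<tau>) * u \<tau>)" for t
    by (simp add: u_def algebra_simps)
  then have "quasi_concave (convolution g u)"
    using quasi_concave_step_plus_pulse[OF \<open>0 \<le> k\<close>]
    by (intro su[unfolded strongly_unimodal_kernel_def, rule_format]) (simp add: u_def)
  moreover have "\<not> quasi_concave (convolution g u)"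
  proof (rule not_quasi_concave_two_exp_tail[OF _ c_neg \<open>l2 < l1\<close> \<open>l1 < 0\<close> start])
    show "convolution g u t = - k * (\<alpha> / l1 + \<beta> / l2) + (\<alpha> * (k + 1 - exp (- l1)) / l1 * exp (l1 * t)
        + \<beta> * (k + 1 - exp (- l2)) / l2 * exp (l2 * t))" if "1 \<le> t" for t
      unfolding u_def using assms(5,6) that
      by (intro convolution_step_plus_pulse_two_exp[OF causal g_eq]) simp_all
  qed
  ultimately show False by contradiction
qed

lemma nonneg_if_strongly_unimodal_truncation:
  fixes g f :: "real \<Rightarrow> real"
  assumes "strongly_unimodal_kernel g" and causal: "\<And>x. x < 0 \<Longrightarrow> g x = 0"
    and g_eq: "\<And>x. 0 \<le> x \<Longrightarrow> g x = f x"
    and "continuous_on UNIV f" and "(f \<longlongrightarrow> 0) at_top"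
  shows "0 \<le> g t"
proof (rule nonneg_if_strongly_unimodal_kernel[OF assms(1) causal])
  have "continuous_on {0..} f"
    using assms(4) by (rule continuous_on_subset) simp
  then show "continuous_on {0..} g"
    by (rule continuous_on_cong[THEN iffD1, rotated 2]) (auto simp: g_eq)
  have "eventually (\<lambda>x. f x = g x) at_top"
    using eventually_ge_at_top[of 0] by eventually_elim (simp add: g_eq)
  with assms(5) show "(g \<longlongrightarrow> 0) at_top"
    by (rule Lim_transform_eventually)
qed

lemma tendsto_mult_exp_neg_at_top:
  fixes l :: real
  assumes "l < 0"
  shows "((\<lambda>t. t * exp (l * t)) \<longlongrightarrow> 0) at_top"
proof -
  have "filterlim (\<lambda>t. - l * t) at_top at_top"
    by (rule filterlim_tendsto_pos_mult_at_top[OF tendsto_const _ filterlim_ident]) (use assms in simp)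
  from filterlim_compose[OF tendsto_power_div_exp_0 this, of 1]
  have "((\<lambda>t. (1 / - l) * ((- l * t) ^ 1 / exp (- l * t))) \<longlongrightarrow> (1 / - l) * 0) at_top"
    by (intro tendsto_mult tendsto_const) simp
  moreover have "(1 / - l) * ((- l * t) ^ 1 / exp (- l * t)) = t * exp (l * t)" for t
    using assms by (simp add: exp_minus field_simps)
  ultimately show ?thesis by simp
qed

lemma nonneg_two_exp_dominant_coeff:
  fixes \<alpha> \<beta> l1 l2 :: real
  assumes nonneg: "\<And>x. 0 \<le> x \<Longrightarrow> 0 \<le> \<alpha> * exp (l1 * x) + \<beta> * exp (l2 * x)" and "l2 < l1"
  shows "0 \<le> \<alpha>"
proof (rule tendsto_lowerbound)
  show "((\<lambda>x. \<alpha> + \<beta> * exp ((l2 - l1) * x)) \<longlongrightarrow> \<alpha>) at_top"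
    using tendsto_add[OF tendsto_const tendsto_mult_right_zero[OF tendsto_exp_neg_at_top]] \<open>l2 < l1\<close>
    by fastforce
  have factor: "\<alpha> + \<beta> * exp ((l2 - l1) * x) =
      exp (- l1 * x) * (\<alpha> * exp (l1 * x) + \<beta> * exp (l2 * x))" for x
    by (simp add: algebra_simps flip: exp_add)
  show "eventually (\<lambda>x. 0 \<le> \<alpha> + \<beta> * exp ((l2 - l1) * x)) at_top"
    using eventually_ge_at_top[of 0] by eventually_elim (simp add: factor nonneg)
qed simp

lemma nonneg_exp_linear_coeffs:
  fixes \<alpha> \<beta> l :: real
  assumes nonneg: "\<And>x. 0 \<le> x \<Longrightarrow> 0 \<le> (\<alpha> + \<beta> * x) * exp (l * x)"
  shows "0 \<le> \<alpha>" "0 \<le> \<beta>"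
proof -
  show "0 \<le> \<alpha>" using nonneg[of 0] by simp
  show "0 \<le> \<beta>"
  proof (rule ccontr)
    assume "\<not> 0 \<le> \<beta>"
    define x where "x = (\<alpha> + 1) / - \<beta>"
    have "0 \<le> x" "\<alpha> + \<beta> * x = -1"
      using \<open>\<not> 0 \<le> \<beta>\<close> \<open>0 \<le> \<alpha>\<close> by (auto simp: x_def field_simps)
    then show False using nonneg[of x] by (simp add: mult_le_0_iff)
  qed
qed

text \<open>Shifting by half a period of the oscillation flips the sign.\<close>

lemma nonneg_complex_exp_eq_zero:
  fixes z \<mu> :: complex
  assumes "0 < Im \<mu>" and nonneg: "\<And>x. 0 \<le> x \<Longrightarrow> 0 \<le> Re (z * exp (\<mu> * of_real x))" and "0 \<le> x"
  shows "Re (z * exp (\<mu> * of_real x)) = 0"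
proof -
  define P where "P = pi / Im \<mu>"
  have "0 < P" using \<open>0 < Im \<mu>\<close> by (simp add: P_def)
  have "\<mu> * of_real P = Complex (Re \<mu> * P) pi"
    using \<open>0 < Im \<mu>\<close> by (simp add: P_def complex_eq_iff)
  then have "exp (\<mu> * of_real P) = - of_real (exp (Re \<mu> * P))"
    by (simp add: exp_eq_polar)
  then have "Re (z * exp (\<mu> * of_real (x + P))) = - exp (Re \<mu> * P) * Re (z * exp (\<mu> * of_real x))"
    by (simp add: distrib_left exp_add) (simp add: algebra_simps)
  moreover have "0 \<le> Re (z * exp (\<mu> * of_real (x + P)))"
    using \<open>0 \<le> x\<close> \<open>0 < P\<close> by (intro nonneg) simp
  ultimately have "Re (z * exp (\<mu> * of_real x)) \<le> 0"
    by (simp add: mult_le_0_iff)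
  with nonneg[OF \<open>0 \<le> x\<close>] show ?thesis by simp
qed

lemma strongly_unimodal_two_exp_iff:
  fixes g :: "real \<Rightarrow> real"
  assumes causal: "\<And>x. x < 0 \<Longrightarrow> g x = 0"
    and g_eq: "\<And>x. 0 \<le> x \<Longrightarrow> g x = \<alpha> * exp (l1 * x) + \<beta> * exp (l2 * x)"
    and "l2 < l1" "l1 < 0"
  shows "strongly_unimodal_kernel g \<longleftrightarrow> (\<forall>t. 0 \<le> g t) \<and> \<alpha> * \<beta> \<le> 0"
proof
  assume su: "strongly_unimodal_kernel g"
  have "((\<lambda>x. \<alpha> * exp (l1 * x) + \<beta> * exp (l2 * x)) \<longlongrightarrow> \<alpha> * 0 + \<beta> * 0) at_top"
    using \<open>l2 < l1\<close> \<open>l1 < 0\<close> by (intro tendsto_intros tendsto_exp_neg_at_top) simp_all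
  then have g_nonneg: "0 \<le> g t" for t
    by (intro nonneg_if_strongly_unimodal_truncation[OF su causal g_eq]) (auto intro!: continuous_intros)
  have "\<not> (0 < \<alpha> \<and> 0 < \<beta>)"
    using not_strongly_unimodal_two_exp[OF causal g_eq _ _ \<open>l2 < l1\<close> \<open>l1 < 0\<close>] su by blast
  moreover have "0 \<le> \<alpha> + \<beta>" using g_nonneg[of 0] g_eq[of 0] by simp
  ultimately have "\<not> 0 < \<alpha> * \<beta>"
    by (auto simp: zero_less_mult_iff)
  with g_nonneg show "(\<forall>t. 0 \<le> g t) \<and> \<alpha> * \<beta> \<le> 0" by simp
next
  assume "(\<forall>t. 0 \<le> g t) \<and> \<alpha> * \<beta> \<le> 0"
  then have g_nonneg: "\<And>t. 0 \<le> g t" and "\<alpha> * \<beta> \<le> 0" by simp_all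
  have "0 \<le> \<alpha> * exp (l1 * x) + \<beta> * exp (l2 * x)" if "0 \<le> x" for x
    using g_nonneg[of x] g_eq[OF that] by simp
  from nonneg_two_exp_dominant_coeff[OF this \<open>l2 < l1\<close>] have "0 \<le> \<alpha>" .
  have "0 \<le> \<alpha> + \<beta>" using g_nonneg[of 0] g_eq[of 0] by simp
  consider "\<alpha> = 0" "\<beta> = 0" | "0 < \<alpha>" "\<beta> = 0" | "\<alpha> = 0" "0 < \<beta>" | "0 < \<alpha>" "\<beta> < 0"
    using \<open>0 \<le> \<alpha>\<close> \<open>0 \<le> \<alpha> + \<beta>\<close> \<open>\<alpha> * \<beta> \<le> 0\<close>
    by (cases "\<alpha> = 0"; cases "\<beta> = 0") (auto simp: mult_le_0_iff)
  then show "strongly_unimodal_kernel g"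
  proof cases
    case 1
    then have "g x = 0" for x
      by (cases "x < 0") (simp_all add: causal g_eq)
    then show ?thesis by (rule strongly_unimodal_kernel_zero)
  next
    case 2
    then show ?thesis
      by (intro strongly_unimodal_exp[OF causal, where a = \<alpha> and l = l1]) (simp_all add: g_eq)
  next
    case 3
    then show ?thesis
      by (intro strongly_unimodal_exp[OF causal, where a = \<beta> and l = l2]) (simp_all add: g_eq)
  next
    case 4
    then show ?thesis
      using \<open>0 \<le> \<alpha> + \<beta>\<close> \<open>l2 < l1\<close> by (intro strongly_unimodal_two_exp[OF causal g_eq])
  qed
qed

lemma strongly_unimodal_exp_linear_iff:
  fixes g :: "real \<Rightarrow> real"
  assumes causal: "\<And>x. x < 0 \<Longrightarrow> g x = 0"
    and g_eq: "\<And>x. 0 \<le> x \<Longrightarrow> g x = (\<alpha> + \<beta> * x) * exp (l * x)" and "l < 0"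
  shows "strongly_unimodal_kernel g \<longleftrightarrow> (\<forall>t. 0 \<le> g t)"
proof
  assume su: "strongly_unimodal_kernel g"
  have "((\<lambda>x. \<alpha> * exp (l * x) + \<beta> * (x * exp (l * x))) \<longlongrightarrow> \<alpha> * 0 + \<beta> * 0) at_top"
    using \<open>l < 0\<close> by (intro tendsto_intros tendsto_exp_neg_at_top tendsto_mult_exp_neg_at_top)
  then have "((\<lambda>x. (\<alpha> + \<beta> * x) * exp (l * x)) \<longlongrightarrow> 0) at_top"
    by (simp add: algebra_simps)
  then show "\<forall>t. 0 \<le> g t"
    by (auto intro!: nonneg_if_strongly_unimodal_truncation[OF su causal g_eq] continuous_intros)
next
  assume g_nonneg: "\<forall>t. 0 \<le> g t"
  then have "0 \<le> (\<alpha> + \<beta> * x) * exp (l * x)" if "0 \<le> x" for x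
    using g_eq[OF that] by metis
  then have "0 \<le> \<alpha>" "0 \<le> \<beta>"
    using nonneg_exp_linear_coeffs[where \<alpha> = \<alpha> and \<beta> = \<beta> and l = l] by blast+
  then consider "\<alpha> = 0" "\<beta> = 0" | "0 < \<alpha>" "\<beta> = 0" | "0 < \<beta>"
    by fastforce
  then show "strongly_unimodal_kernel g"
  proof cases
    case 1
    then have "g x = 0" for x
      by (cases "x < 0") (simp_all add: causal g_eq)
    then show ?thesis by (rule strongly_unimodal_kernel_zero)
  next
    case 2
    then show ?thesis
      by (intro strongly_unimodal_exp[OF causal, where a = \<alpha> and l = l]) (simp_all add: g_eq)
  next
    case 3
    then show ?thesis using \<open>0 \<le> \<alpha>\<close> by (intro strongly_unimodal_exp_linear[OF causal g_eq])
  qed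
qed

lemma strongly_unimodal_damped_oscillation_iff:
  fixes g :: "real \<Rightarrow> real" and z \<mu> :: complex
  assumes causal: "\<And>x. x < 0 \<Longrightarrow> g x = 0"
    and g_eq: "\<And>x. 0 \<le> x \<Longrightarrow> g x = Re (z * exp (\<mu> * of_real x))" and "Re \<mu> < 0" "0 < Im \<mu>"
  shows "strongly_unimodal_kernel g \<longleftrightarrow> (\<forall>t. 0 \<le> g t)"
proof
  assume su: "strongly_unimodal_kernel g"
  have "((\<lambda>x. Re (z * exp (\<mu> * of_real x))) \<longlongrightarrow> 0) at_top"
  proof (rule Lim_null_comparison)
    have "norm (Re (z * exp (\<mu> * of_real x))) \<le> cmod (z * exp (\<mu> * of_real x))" for x
      by (simp only: real_norm_def abs_Re_le_cmod)
    also have "cmod (z * exp (\<mu> * of_real x)) = cmod z * exp (Re \<mu> * x)" for x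
      by (simp add: norm_mult norm_exp_eq_Re)
    finally show "eventually (\<lambda>x. norm (Re (z * exp (\<mu> * of_real x))) \<le> cmod z * exp (Re \<mu> * x)) at_top"
      by (intro always_eventually allI)
    show "((\<lambda>x. cmod z * exp (Re \<mu> * x)) \<longlongrightarrow> 0) at_top"
      using \<open>Re \<mu> < 0\<close> by (intro tendsto_mult_right_zero tendsto_exp_neg_at_top)
  qed
  then show "\<forall>t. 0 \<le> g t"
    by (auto intro!: nonneg_if_strongly_unimodal_truncation[OF su causal g_eq] continuous_intros)
next
  assume g_nonneg: "\<forall>t. 0 \<le> g t"
  have nonneg: "0 \<le> Re (z * exp (\<mu> * of_real x))" if "0 \<le> x" for x
    using g_eq[OF that] g_nonneg by metis
  have "g x = 0" for x
  proof (cases "x < 0")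
    case False
    then have "0 \<le> x" by simp
    with nonneg_complex_exp_eq_zero[OF \<open>0 < Im \<mu>\<close> nonneg] show ?thesis
      by (simp only: g_eq)
  qed (simp add: causal)
  then show "strongly_unimodal_kernel g"
    by (rule strongly_unimodal_kernel_zero)
qed

section \<open>Second-order kernels\<close>

text \<open>g is a causal impulse response whose Taylor coefficients m at 0 obey the Cayley-Hamilton
  recurrence of a Hurwitz matrix with trace \<sigma> and determinant \<delta>.\<close>

locale second_order_kernel =
  fixes g :: "real \<Rightarrow> real" and m :: "nat \<Rightarrow> real" and \<sigma> \<delta> :: real
  assumes causal: "\<And>x. x < 0 \<Longrightarrow> g x = 0"
    and sums_g: "\<And>t. 0 \<le> t \<Longrightarrow> (\<lambda>k. t ^ k / fact k * m k) sums g t"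
    and m_Suc_Suc: "\<And>k. m (Suc (Suc k)) = \<sigma> * m (Suc k) - \<delta> * m k"
    and \<sigma>_neg: "\<sigma> < 0" and \<delta>_pos: "0 < \<delta>"
begin

lemma g_eq_if_sums:
  assumes "\<And>t. (\<lambda>k. t ^ k / fact k * m k) sums f t" and "0 \<le> x"
  shows "g x = f x"
  using sums_g[OF \<open>0 \<le> x\<close>] assms(1) by (rule sums_unique2)

lemma markov_condition_if_discriminant_nonpos:
  assumes "\<sigma>\<^sup>2 - 4 * \<delta> \<le> 0"
  shows "0 \<le> (m 1)\<^sup>2 - m 0 * m 2"
proof -
  have m2: "m 2 = \<sigma> * m 1 - \<delta> * m 0"
    using m_Suc_Suc[of 0] by (simp add: numeral_2_eq_2)
  have "(m 1)\<^sup>2 - m 0 * m 2 = (m 1 - \<sigma> * m 0 / 2)\<^sup>2 + (\<delta> - \<sigma>\<^sup>2 / 4) * (m 0)\<^sup>2"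
    unfolding m2 by (simp add: power2_eq_square algebra_simps)
  moreover have "0 \<le> (\<delta> - \<sigma>\<^sup>2 / 4) * (m 0)\<^sup>2"
    using assms by simp
  ultimately show ?thesis by simp
qed

lemma strongly_unimodal_iff_distinct_roots:
  assumes "0 < \<sigma>\<^sup>2 - 4 * \<delta>"
  shows "strongly_unimodal_kernel g \<longleftrightarrow> (\<forall>t. 0 \<le> g t) \<and> 0 \<le> (m 1)\<^sup>2 - m 0 * m 2"
proof -
  define s where "s = sqrt (\<sigma>\<^sup>2 - 4 * \<delta>)"
  define l1 where "l1 = (\<sigma> + s) / 2"
  define l2 where "l2 = (\<sigma> - s) / 2"
  have "0 < s" "s\<^sup>2 = \<sigma>\<^sup>2 - 4 * \<delta>" using assms by (auto simp: s_def)
  then have "l2 < l1" by (simp add: l1_def l2_def)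
  have "s\<^sup>2 < (- \<sigma>)\<^sup>2" using \<open>s\<^sup>2 = \<sigma>\<^sup>2 - 4 * \<delta>\<close> \<delta>_pos by simp
  then have "s < - \<sigma>" using \<sigma>_neg by (intro power2_less_imp_less[of s]) simp_all
  then have "l1 < 0" by (simp add: l1_def)
  have root1: "l1\<^sup>2 = \<sigma> * l1 - \<delta>" and root2: "l2\<^sup>2 = \<sigma> * l2 - \<delta>"
    using \<open>s\<^sup>2 = \<sigma>\<^sup>2 - 4 * \<delta>\<close> by (simp_all add: l1_def l2_def power2_eq_square field_simps)
  have "l1 \<noteq> l2" using \<open>l2 < l1\<close> by simp
  obtain \<alpha> \<beta> where m_eq: "\<And>k. m k = \<alpha> * l1 ^ k + \<beta> * l2 ^ k"
    using linrec2_distinct_roots[where m = m, OF m_Suc_Suc root1 root2 \<open>l1 \<noteq> l2\<close>] by blast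
  have g_eq: "g x = \<alpha> * exp (l1 * x) + \<beta> * exp (l2 * x)" if "0 \<le> x" for x
    using that by (rule g_eq_if_sums[where f = "\<lambda>x. \<alpha> * exp (l1 * x) + \<beta> * exp (l2 * x)", rotated])
      (unfold m_eq, rule sums_two_exp)
  have markov: "(m 1)\<^sup>2 - m 0 * m 2 = - (\<alpha> * \<beta>) * (l1 - l2)\<^sup>2"
    by (simp add: m_eq power2_eq_square algebra_simps)
  have "0 \<le> (m 1)\<^sup>2 - m 0 * m 2 \<longleftrightarrow> \<alpha> * \<beta> \<le> 0"
    unfolding markov using \<open>l1 \<noteq> l2\<close> by (auto simp: mult_le_0_iff)
  with strongly_unimodal_two_exp_iff[OF causal g_eq \<open>l2 < l1\<close> \<open>l1 < 0\<close>] show ?thesis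
    by simp
qed

lemma strongly_unimodal_iff_double_root:
  assumes "\<sigma>\<^sup>2 - 4 * \<delta> = 0"
  shows "strongly_unimodal_kernel g \<longleftrightarrow> (\<forall>t. 0 \<le> g t) \<and> 0 \<le> (m 1)\<^sup>2 - m 0 * m 2"
proof -
  define l where "l = \<sigma> / 2"
  have "l < 0" using \<sigma>_neg by (simp add: l_def)
  have "\<delta> = l\<^sup>2" using assms by (simp add: l_def power2_eq_square field_simps)
  then have rec: "m (Suc (Suc k)) = 2 * l * m (Suc k) - l\<^sup>2 * m k" for k
    using m_Suc_Suc[of k] by (simp add: l_def)
  obtain \<alpha> \<beta> where m_eq: "\<And>k. m k = \<alpha> * l ^ k + \<beta> * (real k * l ^ (k - 1))"
    using linrec2_double_root[where m = m, OF rec] by blast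
  have g_eq: "g x = (\<alpha> + \<beta> * x) * exp (l * x)" if "0 \<le> x" for x
    using that by (rule g_eq_if_sums[where f = "\<lambda>x. (\<alpha> + \<beta> * x) * exp (l * x)", rotated])
      (unfold m_eq, rule sums_exp_linear)
  have "0 \<le> (m 1)\<^sup>2 - m 0 * m 2"
    using assms by (intro markov_condition_if_discriminant_nonpos) simp
  with strongly_unimodal_exp_linear_iff[OF causal g_eq \<open>l < 0\<close>] show ?thesis
    by simp
qed

lemma strongly_unimodal_iff_complex_roots:
  assumes "\<sigma>\<^sup>2 - 4 * \<delta> < 0"
  shows "strongly_unimodal_kernel g \<longleftrightarrow> (\<forall>t. 0 \<le> g t) \<and> 0 \<le> (m 1)\<^sup>2 - m 0 * m 2"
proof -
  define w where "w = sqrt (4 * \<delta> - \<sigma>\<^sup>2) / 2"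
  define \<mu> where "\<mu> = Complex (\<sigma> / 2) w"
  have "Re \<mu> < 0" "0 < Im \<mu>" using assms \<sigma>_neg by (simp_all add: \<mu>_def w_def)
  have "w\<^sup>2 = \<delta> - \<sigma>\<^sup>2 / 4"
    using assms by (simp add: w_def power_divide)
  then have "\<mu>\<^sup>2 = of_real \<sigma> * \<mu> - of_real \<delta>"
    by (simp add: \<mu>_def complex_eq_iff power2_eq_square algebra_simps)
  moreover have "Im \<mu> \<noteq> 0" using \<open>0 < Im \<mu>\<close> by simp
  ultimately obtain z where m_eq: "\<And>k. m k = Re (z * \<mu> ^ k)"
    using linrec2_complex_roots[where m = m, OF m_Suc_Suc] by blast
  have g_eq: "g x = Re (z * exp (\<mu> * of_real x))" if "0 \<le> x" for x
    using that by (rule g_eq_if_sums[where f = "\<lambda>x. Re (z * exp (\<mu> * of_real x))", rotated])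
      (unfold m_eq, rule sums_complex_exp)
  have "0 \<le> (m 1)\<^sup>2 - m 0 * m 2"
    using assms by (intro markov_condition_if_discriminant_nonpos) simp
  with strongly_unimodal_damped_oscillation_iff[OF causal g_eq \<open>Re \<mu> < 0\<close> \<open>0 < Im \<mu>\<close>] show ?thesis
    by simp
qed

theorem strongly_unimodal_iff:
  "strongly_unimodal_kernel g \<longleftrightarrow> (\<forall>t. 0 \<le> g t) \<and> 0 \<le> (m 1)\<^sup>2 - m 0 * m 2"
  using strongly_unimodal_iff_distinct_roots strongly_unimodal_iff_double_root
    strongly_unimodal_iff_complex_roots
  by (cases "\<sigma>\<^sup>2 - 4 * \<delta>" "0::real" rule: linorder_cases) auto

end

theorem corollary1:
  fixes A :: "real^2^2" and b c :: "real^2"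
  assumes "hurwitz A"
  shows "strongly_unimodal A b c \<longleftrightarrow>
           ((\<forall>t. impulse_resp A b c t \<ge> 0) \<and>
            (c \<bullet> (A *v b))\<^sup>2 - (c \<bullet> b) * (c \<bullet> ((A ** A) *v b)) \<ge> 0)"
proof -
  interpret second_order_kernel "impulse_resp A b c" "markov_param A b c" "trace2 A" "det2 A"
    using impulse_resp_sums markov_param_Suc_Suc hurwitz_trace2_det2[OF assms]
    by unfold_locales (simp_all add: impulse_resp_def)
  have "markov_param A b c 0 = c \<bullet> b" "markov_param A b c 1 = c \<bullet> (A *v b)"
    "markov_param A b c 2 = c \<bullet> ((A ** A) *v b)"
    by (simp_all add: markov_param_def mat_pow_Suc numeral_2_eq_2)
  moreover have "strongly_unimodal A b c \<longleftrightarrow> strongly_unimodal_kernel (impulse_resp A b c)"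
    by (simp add: strongly_unimodal_def strongly_unimodal_kernel_def)
  ultimately show ?thesis
    using strongly_unimodal_iff by simp
qed

end
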